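(* Let $n=2m$ and let $\Delta'$ be the simplicial complex on vertex set $\{(i,j):1\le i\le j\le n,\ i+j\ne n+1\}$ whose faces are the sets $F$ with $\prod_{(i,j)\in F}x_{ij}\notin K(2,n)$, with $K(2,n)$ as in the context. Order the facets of $\Delta'$ as follows: if $F$ is a facet of $\Delta_A$ and $G$ a facet of $\Delta_B$, then $F<G$ iff $A<B$ lexicographically, or $A=B$ and $F<G$ in the standard order of paths in $T_A$. Then this total order is a two-way shelling of $\Delta'$; precisely, for every facet $F$ of $\Delta'$, $$\langle F\rangle\cap\langle G:G<F\rangle=\langle F\setminus\{x\}:x\in F^-\rangle\quad\text{and}\quad\langle F\rangle\cap\langle G:G>F\rangle=\langle F\setminus\{x\}:x\in F^+\rangle.$$
   Context: $K(2,n)\subset K[x_{ij}:1\le i\le j\le n]$ is generated by the products $x_{ij}x_{hk}$ ($i\le j$, $h\le k$) not involving any $x_{a,n+1-a}$ and such that either $a+b=n+1$ for some $a\in\{i,j\}$, $b\in\{h,k\}$, or $i<h$ and $j<k$. $\langle F_1,\dots,F_k\rangle$ is the smallest simplicial complex containing $F_1,\dots,F_k$. $\mathcal A$ is the family of $m$-subsets $A\subseteq[n]$ with $i+j\ne n+1$ for all $i,j\in A$; for $A=\{a_1<\dots<a_m\}$, $T_A=\{(i,j):i\le j,\ i,j\in A\}$ and $\Delta_A=\{F\in\Delta':F\subseteq T_A\}$. It is a fact (established in the paper) that the facets of $\Delta_A$ are exactly the paths in $T_A$ starting at $(a_1,a_m)$ and ending at a diagonal position $(a_i,a_i)$, with steps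 horizontally left or vertically down, and each facet of $\Delta'$ is a facet of exactly one $\Delta_A$. Lexicographic order: $\{a_1<\dots<a_m\}<\{b_1<\dots<b_m\}$ iff $a_j<b_j$ for the smallest $j$ with $a_j\ne b_j$. Standard order of paths in $T_A$: $F<G$ iff at the first step (starting from $(a_1,a_m)$) where they differ, $F$'s step is horizontal and $G$'s is vertical. Types: an interior point of a path is a left turn if the step into it is horizontal and the step out vertical, a right turn if the step in is vertical and the step out horizontal; the last point (if the path has at least two points) is a left turn if the last step is horizontal, a right turn if vertical; all other points are isolated, each being the only point of the path with a certain $c\in A$ as row or column index ($c$ is its index). $F^-$ = right turns of $F$ together with isolated points of index $>m$; $F^+=F\setminus F^-$ = left turns together with isolated points of index $\le m$. *)

theory Defs
  imports Main
begin

type_synonym pos = "nat \<times> nat"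

definition V :: "nat \<Rightarrow> pos set" where
  "V n = {(i, j). 1 \<le> i \<and> i \<le> j \<and> j \<le> n \<and> i + j \<noteq> n + 1}"

text \<open>gen n p q: the product x_p x_q is one of the listed generators of K(2,n).\<close>
definition gen :: "nat \<Rightarrow> pos \<Rightarrow> pos \<Rightarrow> bool" where
  "gen n p q = (case p of (i, j) \<Rightarrow> case q of (h, k) \<Rightarrow>
     i \<le> j \<and> h \<le> k \<and>
     i + j \<noteq> n + 1 \<and> h + k \<noteq> n + 1 \<and>
     ((\<exists>a\<in>{i, j}. \<exists>b\<in>{h, k}. a + b = n + 1) \<or> (i < h \<and> j < k)))"

text \<open>F is a face iff the squarefree monomial prod x_p (p in F) is not in K(2,n),
  i.e. no generator x_p x_q (p, q distinct elements of F) divides it.\<close>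
definition Delta' :: "nat \<Rightarrow> pos set set" where
  "Delta' n = {F. F \<subseteq> V n \<and> (\<forall>p\<in>F. \<forall>q\<in>F. p \<noteq> q \<longrightarrow> \<not> gen n p q)}"

definition facets :: "'a set set \<Rightarrow> 'a set set" where
  "facets S = {F \<in> S. \<forall>G\<in>S. F \<subseteq> G \<longrightarrow> G = F}"

definition cplx :: "'a set set \<Rightarrow> 'a set set" where
  "cplx S = {H. \<exists>F\<in>S. H \<subseteq> F}"

definition AA :: "nat \<Rightarrow> nat set set" where
  "AA n = {A. A \<subseteq> {1..n} \<and> card A = n div 2 \<and> (\<forall>i\<in>A. \<forall>j\<in>A. i + j \<noteq> n + 1)}"

definition T :: "nat set \<Rightarrow> pos set" where
  "T A = {(i, j). i \<in> A \<and> j \<in> A \<and> i \<le> j}"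

definition DeltaA :: "nat \<Rightarrow> nat set \<Rightarrow> pos set set" where
  "DeltaA n A = {F \<in> Delta' n. F \<subseteq> T A}"

text \<open>One step: horizontally left (column to the previous element of A) or
  vertically down (row to the next element of A).\<close>
definition hstep :: "nat set \<Rightarrow> pos \<Rightarrow> pos \<Rightarrow> bool" where
  "hstep A p q = (fst q = fst p \<and> snd q \<in> A \<and> snd q < snd p \<and>
                  (\<forall>c\<in>A. \<not> (snd q < c \<and> c < snd p)))"

definition vstep :: "nat set \<Rightarrow> pos \<Rightarrow> pos \<Rightarrow> bool" where
  "vstep A p q = (snd q = snd p \<and> fst q \<in> A \<and> fst p < fst q \<and>
                  (\<forall>c\<in>A. \<not> (fst p < c \<and> c < fst q)))"

definition is_path :: "nat set \<Rightarrow> pos list \<Rightarrow> bool" where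
  "is_path A ps = (ps \<noteq> [] \<and> hd ps = (Min A, Max A) \<and> fst (last ps) = snd (last ps) \<and>
     set ps \<subseteq> T A \<and>
     (\<forall>k. Suc k < length ps \<longrightarrow> hstep A (ps ! k) (ps ! Suc k) \<or> vstep A (ps ! k) (ps ! Suc k)))"

text \<open>Standard order: at the first step where the paths differ, the step of ps is
  horizontal (and that of qs vertical).\<close>
definition path_less :: "pos list \<Rightarrow> pos list \<Rightarrow> bool" where
  "path_less ps qs = (\<exists>k. 0 < k \<and> k < length ps \<and> k < length qs \<and> take k ps = take k qs \<and>
      ps ! k \<noteq> qs ! k \<and> fst (ps ! k) = fst (ps ! (k - 1)) \<and> snd (qs ! k) = snd (qs ! (k - 1)))"

definition lex_less :: "nat set \<Rightarrow> nat set \<Rightarrow> bool" where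
  "lex_less A B = (let as = sorted_list_of_set A; bs = sorted_list_of_set B in
     \<exists>j. j < length as \<and> j < length bs \<and> take j as = take j bs \<and> as ! j < bs ! j)"

definition facet_less :: "nat \<Rightarrow> pos set \<Rightarrow> pos set \<Rightarrow> bool" where
  "facet_less n F G = (\<exists>A B. A \<in> AA n \<and> B \<in> AA n \<and> F \<in> facets (DeltaA n A) \<and>
      G \<in> facets (DeltaA n B) \<and>
      (lex_less A B \<or> (A = B \<and> (\<exists>ps qs. is_path A ps \<and> is_path A qs \<and> set ps = F \<and>
          set qs = G \<and> path_less ps qs))))"

definition horiz :: "pos \<Rightarrow> pos \<Rightarrow> bool" where "horiz p q = (fst p = fst q)"
definition vert :: "pos \<Rightarrow> pos \<Rightarrow> bool" where "vert p q = (snd p = snd q)"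

definition left_turn :: "pos list \<Rightarrow> nat \<Rightarrow> bool" where
  "left_turn ps k =
     ((0 < k \<and> Suc k < length ps \<and> horiz (ps ! (k - 1)) (ps ! k) \<and> vert (ps ! k) (ps ! Suc k)) \<or>
      (2 \<le> length ps \<and> k = length ps - 1 \<and> horiz (ps ! (k - 1)) (ps ! k)))"

definition right_turn :: "pos list \<Rightarrow> nat \<Rightarrow> bool" where
  "right_turn ps k =
     ((0 < k \<and> Suc k < length ps \<and> vert (ps ! (k - 1)) (ps ! k) \<and> horiz (ps ! k) (ps ! Suc k)) \<or>
      (2 \<le> length ps \<and> k = length ps - 1 \<and> vert (ps ! (k - 1)) (ps ! k)))"

definition isolated :: "pos list \<Rightarrow> nat \<Rightarrow> bool" where
  "isolated ps k = (k < length ps \<and> \<not> left_turn ps k \<and> \<not> right_turn ps k)"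

definition is_index :: "pos list \<Rightarrow> nat \<Rightarrow> nat \<Rightarrow> bool" where
  "is_index ps k c = (c \<in> {fst (ps ! k), snd (ps ! k)} \<and>
      (\<forall>l < length ps. l \<noteq> k \<longrightarrow> fst (ps ! l) \<noteq> c \<and> snd (ps ! l) \<noteq> c))"

definition minus_list :: "nat \<Rightarrow> pos list \<Rightarrow> pos set" where
  "minus_list m ps = {ps ! k | k. k < length ps \<and>
      (right_turn ps k \<or> (isolated ps k \<and> (\<exists>c. is_index ps k c \<and> c > m)))}"

definition Fminus :: "nat \<Rightarrow> pos set \<Rightarrow> pos set" where
  "Fminus n F = {p. \<exists>A ps. A \<in> AA n \<and> is_path A ps \<and> set ps = F \<and> p \<in> minus_list (n div 2) ps}"

definition Fplus :: "nat \<Rightarrow> pos set \<Rightarrow> pos set" where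
  "Fplus n F = F - Fminus n F"

end

theory Submission
  imports Defs
begin

(*
  Every facet F of Delta' is the point set of a lattice path in T_A, and both the path and
  A \<in> \<A> are determined by F.  The proof compares F with a facet G through the first index,
  or the first step, where they differ.

  A facet G before F misses a point of F^-.  If G lies in Delta_B with B lexicographically
  smaller than A, then some index c > m of A is missing from B, and some point of F^- uses c.
  If G is an earlier path of T_A, it leaves F by a horizontal step where F goes down; F continues
  down that column to a right turn, which G can no longer reach.

  Conversely every x \<in> F^- is dropped by an earlier facet.  A right turn is replaced by the
  opposite corner of its square, giving an earlier path of T_A.  An isolated point of index c > m
  is deleted, and the remaining path extends to a path of T_B for the lexicographically smaller
  B = A - {c} \<union> {n + 1 - c}.  The statement for F^+ and later facets is the mirror image.
*)

section \<open>Paths in T_A\<close>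

lemma is_pathD:
  assumes "is_path A ps"
  shows "ps \<noteq> []" "hd ps = (Min A, Max A)" "fst (last ps) = snd (last ps)" "set ps \<subseteq> T A"
    "\<And>k. Suc k < length ps \<Longrightarrow> hstep A (ps!k) (ps!Suc k) \<or> vstep A (ps!k) (ps!Suc k)"
  using assms unfolding is_path_def by auto

lemma path_nth_in_T:
  assumes "is_path A ps" "k < length ps"
  shows "fst (ps!k) \<in> A" "snd (ps!k) \<in> A" "fst (ps!k) \<le> snd (ps!k)"
  using is_pathD(4)[OF assms(1)] nth_mem[OF assms(2)] unfolding T_def by auto

lemma path_nth_0: "is_path A ps \<Longrightarrow> ps!0 = (Min A, Max A)"
  using is_pathD(1,2) by (metis hd_conv_nth)

lemma path_last_diag: "is_path A ps \<Longrightarrow> fst (ps!(length ps - 1)) = snd (ps!(length ps - 1))"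
  using is_pathD(1,3) by (metis last_conv_nth)

lemma path_step_cases [consumes 2, case_names horiz vert]:
  assumes "is_path A ps" "Suc k < length ps"
  obtains (horiz) "fst (ps!Suc k) = fst (ps!k)" "snd (ps!Suc k) < snd (ps!k)"
      "\<forall>c\<in>A. \<not> (snd (ps!Suc k) < c \<and> c < snd (ps!k))"
    | (vert) "snd (ps!Suc k) = snd (ps!k)" "fst (ps!k) < fst (ps!Suc k)"
      "\<forall>c\<in>A. \<not> (fst (ps!k) < c \<and> c < fst (ps!Suc k))"
  using is_pathD(5)[OF assms] unfolding hstep_def vstep_def by blast

lemma path_step_row_or_col:
  "is_path A ps \<Longrightarrow> Suc k < length ps \<Longrightarrow> fst (ps!Suc k) = fst (ps!k) \<or> snd (ps!Suc k) = snd (ps!k)"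
  by (metis path_step_cases)

lemma path_hstepI:
  "is_path A ps \<Longrightarrow> Suc k < length ps \<Longrightarrow> fst (ps!Suc k) = fst (ps!k) \<Longrightarrow> hstep A (ps!k) (ps!Suc k)"
  using is_pathD(5) unfolding hstep_def vstep_def by (metis less_irrefl)

lemma path_vstepI:
  "is_path A ps \<Longrightarrow> Suc k < length ps \<Longrightarrow> snd (ps!Suc k) = snd (ps!k) \<Longrightarrow> vstep A (ps!k) (ps!Suc k)"
  using is_pathD(5) unfolding hstep_def vstep_def by (metis less_irrefl)

lemma path_nth_mono:
  assumes "is_path A ps" "i \<le> j" "j < length ps"
  shows "fst (ps!i) \<le> fst (ps!j) \<and> snd (ps!j) \<le> snd (ps!i)"
  using assms(2,3)
proof (induction j)
  case (Suc j)
  show ?case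
  proof (cases "i = Suc j")
    case False
    with Suc have "fst (ps!i) \<le> fst (ps!j) \<and> snd (ps!j) \<le> snd (ps!i)" by simp
    with path_step_cases[OF assms(1) Suc.prems(2)] show ?thesis by cases auto
  qed simp
qed simp

lemma path_nth_inj:
  assumes ps: "is_path A ps" and "i < j" "j < length ps"
  shows "ps!i \<noteq> ps!j"
proof -
  have "fst (ps!i) \<le> fst (ps!Suc i) \<and> snd (ps!Suc i) \<le> snd (ps!i)"
    "fst (ps!Suc i) \<le> fst (ps!j) \<and> snd (ps!j) \<le> snd (ps!Suc i)"
    using path_nth_mono[OF ps] assms by auto
  with path_step_cases[OF ps, of i] assms show ?thesis by cases auto
qed

lemma path_nth_eq_iff:
  "is_path A ps \<Longrightarrow> i < length ps \<Longrightarrow> j < length ps \<Longrightarrow> ps!i = ps!j \<longleftrightarrow> i = j"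
  by (metis linorder_neqE_nat path_nth_inj)

lemma path_distinct: "is_path A ps \<Longrightarrow> distinct ps"
  by (simp add: distinct_conv_nth path_nth_eq_iff)

lemma sorted_wrt_asym_unique:
  assumes "asymp R" "sorted_wrt R xs" "sorted_wrt R ys" "set xs = set ys"
  shows "xs = ys"
  using assms(2-4)
proof (induction xs arbitrary: ys)
  case (Cons x xs)
  then obtain y ys' where ys: "ys = y # ys'" by (cases ys) auto
  have irrefl: "\<not> R z z" for z using assms(1) by (meson asympD)
  have "x = y"
  proof (rule ccontr)
    assume "x \<noteq> y"
    then have "x \<in> set ys'" "y \<in> set xs" using Cons.prems(3) ys by (auto simp: set_eq_iff)
    then have "R y x" "R x y" using Cons.prems(1,2) ys by auto
    then show False using assms(1) by (meson asympD)
  qed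
  moreover have "x \<notin> set xs" "y \<notin> set ys'" using Cons.prems ys irrefl by auto
  ultimately have "set xs = set ys'" using Cons.prems(3) ys by auto
  then show ?case using Cons ys \<open>x = y\<close> by simp
qed simp

lemma path_sorted: "is_path A ps \<Longrightarrow> sorted_wrt (\<lambda>p q. fst p \<le> fst q \<and> snd q \<le> snd p \<and> p \<noteq> q) ps"
  unfolding sorted_wrt_iff_nth_less using path_nth_mono path_nth_inj by (metis less_imp_le_nat)

lemma path_last_enclosing:
  assumes ps: "is_path A ps" and "finite A" "i \<in> A" "j \<in> A"
  obtains k where "k < length ps" "fst (ps!k) \<le> i" "j \<le> snd (ps!k)"
    "Suc k < length ps \<Longrightarrow> \<not> (fst (ps!Suc k) \<le> i \<and> j \<le> snd (ps!Suc k))"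
proof -
  define K where "K = {k. k < length ps \<and> fst (ps!k) \<le> i \<and> j \<le> snd (ps!k)}"
  have "0 \<in> K" unfolding K_def using path_nth_0[OF ps] is_pathD(1)[OF ps] assms by auto
  moreover have fin: "finite K" unfolding K_def by auto
  ultimately have "Max K \<in> K" using Max_in by blast
  moreover have "Suc (Max K) \<notin> K" using Max_ge[OF fin] by fastforce
  ultimately show thesis using that unfolding K_def by blast
qed

lemma path_covers_index:
  assumes ps: "is_path A ps" and "finite A" "a \<in> A"
  shows "\<exists>k<length ps. fst (ps!k) = a \<or> snd (ps!k) = a"
proof -
  obtain k where k: "k < length ps" "fst (ps!k) \<le> a" "a \<le> snd (ps!k)"
    and last: "Suc k < length ps \<Longrightarrow> \<not> (fst (ps!Suc k) \<le> a \<and> a \<le> snd (ps!Suc k))"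
    using path_last_enclosing[OF assms assms(3)] by blast
  show ?thesis
  proof (cases "fst (ps!k) = a \<or> snd (ps!k) = a")
    case False
    then have lt: "fst (ps!k) < a" "a < snd (ps!k)" using k by auto
    have "Suc k < length ps"
      using path_last_diag[OF ps] k(1) lt by (metis Suc_lessI diff_Suc_1 less_asym)
    with path_step_cases[OF ps this] show ?thesis by cases (use last lt assms(3) in auto)
  qed (use k in blast)
qed

lemma path_index_set:
  assumes "finite A" "is_path A ps"
  shows "fst ` set ps \<union> snd ` set ps = A"
proof
  show "fst ` set ps \<union> snd ` set ps \<subseteq> A" using is_pathD(4)[OF assms(2)] unfolding T_def by auto
  show "A \<subseteq> fst ` set ps \<union> snd ` set ps"
  proof
    fix a assume "a \<in> A"
    then obtain k where "k < length ps" "fst (ps!k) = a \<or> snd (ps!k) = a"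
      using path_covers_index[OF assms(2,1)] by blast
    then show "a \<in> fst ` set ps \<union> snd ` set ps" by (metis UnI1 UnI2 image_eqI nth_mem)
  qed
qed

lemma path_unique:
  assumes "finite A" "finite B" "is_path A ps" "is_path B qs" "set ps = set qs"
  shows "A = B \<and> ps = qs"
proof
  show "A = B" using path_index_set[OF assms(1,3)] path_index_set[OF assms(2,4)] assms(5) by simp
  show "ps = qs"
    by (rule sorted_wrt_asym_unique[OF _ path_sorted[OF assms(3)] path_sorted[OF assms(4)]
          assms(5)]) (auto intro: asympI)
qed

section \<open>The family A and its lexicographic order\<close>

lemma AA_D:
  assumes "A \<in> AA n"
  shows "finite A" "a \<in> A \<Longrightarrow> 1 \<le> a \<and> a \<le> n" "a \<in> A \<Longrightarrow> b \<in> A \<Longrightarrow> a + b \<noteq> n + 1"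
    "card A = n div 2"
  using assms unfolding AA_def by (auto intro: finite_subset)

text \<open>Folding {1..2m} onto {1..m} by a \<mapsto> min a (2m + 1 - a) is injective on a set without
  complementary pairs.\<close>
lemma card_pairfree_eq_iff:
  assumes n: "n = 2 * m" and A: "A \<subseteq> {1..n}" "\<forall>a\<in>A. \<forall>b\<in>A. a + b \<noteq> n + 1"
  shows "card A = m \<longleftrightarrow> (\<forall>x\<in>{1..n}. x \<in> A \<or> n + 1 - x \<in> A)"
proof -
  define f where "f a = min a (n + 1 - a)" for a
  have "inj_on f A"
  proof
    fix a b assume ab: "a \<in> A" "b \<in> A" "f a = f b"
    have "a + b \<noteq> n + 1" "a \<le> n" "b \<le> n" using A ab by auto
    then show "a = b" using ab(3) unfolding f_def by (auto simp: min_def split: if_splits)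
  qed
  then have card: "card (f ` A) = card A" by (rule card_image)
  have sub: "f ` A \<subseteq> {1..m}" using A n unfolding f_def by (force simp: min_def)
  have "card A = m \<longleftrightarrow> f ` A = {1..m}"
    using card sub card_subset_eq[of "{1..m}" "f ` A"] by auto
  also have "\<dots> \<longleftrightarrow> (\<forall>x\<in>{1..n}. x \<in> A \<or> n + 1 - x \<in> A)"
  proof
    assume img: "f ` A = {1..m}"
    show "\<forall>x\<in>{1..n}. x \<in> A \<or> n + 1 - x \<in> A"
    proof
      fix x assume x: "x \<in> {1..n}"
      then have "f x \<in> f ` A" using img n unfolding f_def by (auto simp: min_def)
      then obtain a where "a \<in> A" "f a = f x" by auto
      moreover have "a \<le> n" using A \<open>a \<in> A\<close> by auto
      ultimately have "a = x \<or> a = n + 1 - x"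
        using x unfolding f_def by (auto simp: min_def split: if_splits)
      then show "x \<in> A \<or> n + 1 - x \<in> A" using \<open>a \<in> A\<close> by auto
    qed
  next
    assume cover: "\<forall>x\<in>{1..n}. x \<in> A \<or> n + 1 - x \<in> A"
    show "f ` A = {1..m}"
    proof (intro equalityI sub subsetI)
      fix t assume t: "t \<in> {1..m}"
      then have "f t = t" "f (n + 1 - t) = t" using n unfolding f_def by auto
      moreover have "t \<in> A \<or> n + 1 - t \<in> A" using cover t n by auto
      ultimately show "t \<in> f ` A" by (metis imageI)
    qed
  qed
  finally show ?thesis .
qed

lemma AA_complement_mem:
  assumes n: "n = 2 * m" and A: "A \<in> AA n" and x: "x \<in> {1..n}" "x \<notin> A"
  shows "n + 1 - x \<in> A"
  using card_pairfree_eq_iff[OF n, of A] A x n unfolding AA_def by auto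

definition swap_index :: "nat \<Rightarrow> nat set \<Rightarrow> nat \<Rightarrow> nat set" where
  "swap_index n A c = insert (n + 1 - c) (A - {c})"

lemma swap_index_AA:
  assumes n: "n = 2 * m" and A: "A \<in> AA n" and c: "c \<in> A"
  shows "swap_index n A c \<in> AA n"
proof -
  let ?B = "swap_index n A c"
  have c1: "1 \<le> c" "c \<le> n" using AA_D(2)[OF A c] by auto
  have sub: "?B \<subseteq> {1..n}" using A c1 unfolding AA_def swap_index_def by auto
  have pf: "\<forall>a\<in>?B. \<forall>b\<in>?B. a + b \<noteq> n + 1"
  proof (intro ballI)
    fix a b assume "a \<in> ?B" "b \<in> ?B"
    moreover have "(n + 1 - c) + (n + 1 - c) \<noteq> n + 1" using n c1 by presburger
    ultimately show "a + b \<noteq> n + 1"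
      using AA_D(3)[OF A] c1 unfolding swap_index_def by auto
  qed
  have "\<forall>x\<in>{1..n}. x \<in> ?B \<or> n + 1 - x \<in> ?B"
  proof
    fix x assume x: "x \<in> {1..n}"
    show "x \<in> ?B \<or> n + 1 - x \<in> ?B"
    proof (cases "x = c \<or> x = n + 1 - c")
      case False
      then have "n + 1 - x \<noteq> c" using x c1 by auto
      then show ?thesis using AA_complement_mem[OF n A x] False unfolding swap_index_def by auto
    qed (auto simp: swap_index_def)
  qed
  then have "card ?B = m" using card_pairfree_eq_iff[OF n sub pf] by simp
  then show ?thesis using sub pf n unfolding AA_def by auto
qed

definition list_lex_less :: "'a::linorder list \<Rightarrow> 'a list \<Rightarrow> bool" where
  "list_lex_less xs ys = (\<exists>j. j < length xs \<and> j < length ys \<and> take j xs = take j ys \<and> xs!j < ys!j)"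

lemma list_lex_less_Nil [simp]: "\<not> list_lex_less [] ys"
  unfolding list_lex_less_def by simp

lemma list_lex_less_Cons [simp]:
  "list_lex_less (x # xs) (y # ys) \<longleftrightarrow> x < y \<or> (x = y \<and> list_lex_less xs ys)"
proof
  assume "list_lex_less (x # xs) (y # ys)"
  then obtain j where "j < length (x # xs)" "j < length (y # ys)"
    "take j (x # xs) = take j (y # ys)"
    "(x # xs) ! j < (y # ys) ! j" unfolding list_lex_less_def by blast
  then show "x < y \<or> (x = y \<and> list_lex_less xs ys)" unfolding list_lex_less_def by (cases j) auto
next
  assume "x < y \<or> (x = y \<and> list_lex_less xs ys)"
  then show "list_lex_less (x # xs) (y # ys)"
  proof
    assume "x < y"
    then show ?thesis unfolding list_lex_less_def by (intro exI[of _ 0]) auto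
  next
    assume "x = y \<and> list_lex_less xs ys"
    then obtain j where "x = y" "j < length xs" "j < length ys" "take j xs = take j ys"
      "xs!j < ys!j"
      unfolding list_lex_less_def by blast
    then show ?thesis unfolding list_lex_less_def by (intro exI[of _ "Suc j"]) auto
  qed
qed

lemma sorted_list_lex_less_iff:
  assumes "sorted_wrt (<) xs" "sorted_wrt (<) ys" "length xs = length ys"
  shows "list_lex_less xs ys \<longleftrightarrow> (\<exists>a\<in>set xs - set ys. \<forall>b\<in>set ys - set xs. a < b)"
  using assms(3,1,2)
proof (induction xs ys rule: list_induct2)
  case (Cons x xs y ys)
  have sx: "\<forall>z\<in>set xs. x < z" "sorted_wrt (<) xs" and sy: "\<forall>z\<in>set ys. y < z" "sorted_wrt (<) ys"
    using Cons.prems by auto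
  consider "x < y" | "y < x" | "x = y" by fastforce
  then show ?case
  proof cases
    case 1
    have "x \<in> set (x#xs) - set (y#ys)" "\<forall>b\<in>set (y#ys) - set (x#xs). x < b" using 1 sy by auto
    then show ?thesis using 1 by auto
  next
    case 2
    have "\<not> list_lex_less (x#xs) (y#ys)" using 2 by auto
    moreover have "y \<in> set (y#ys) - set (x#xs)" "\<forall>a\<in>set (x#xs). \<not> a < y" using 2 sx by auto
    ultimately show ?thesis by blast
  next
    case 3
    then have "set (x#xs) - set (y#ys) = set xs - set ys"
      "set (y#ys) - set (x#xs) = set ys - set xs"
      using sx sy by auto
    then show ?thesis using Cons.IH sx(2) sy(2) 3 by auto
  qed
qed simp

lemma lex_less_iff:
  assumes "finite A" "finite B" "card A = card B"
  shows "lex_less A B \<longleftrightarrow> (\<exists>a\<in>A - B. \<forall>b\<in>B - A. a < b)"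
proof -
  have "lex_less A B \<longleftrightarrow> (\<exists>a\<in>set (sorted_list_of_set A) - set (sorted_list_of_set B).
      \<forall>b\<in>set (sorted_list_of_set B) - set (sorted_list_of_set A). a < b)"
    unfolding lex_less_def Let_def list_lex_less_def[symmetric]
    by (rule sorted_list_lex_less_iff) (use assms in auto)
  then show ?thesis using assms by simp
qed

text \<open>For members of A the symmetric difference is closed under a \<mapsto> n + 1 - a, so its least
  element lies below m + 1.\<close>
lemma lex_less_AA_small_index:
  assumes n: "n = 2 * m" and A: "A \<in> AA n" and B: "B \<in> AA n" and "lex_less A B"
  shows "\<exists>c\<in>A - B. c \<le> m"
proof -
  obtain a where a: "a \<in> A" "a \<notin> B" "\<forall>b\<in>B - A. a < b"
    using assms(4) lex_less_iff[OF AA_D(1)[OF A] AA_D(1)[OF B]] AA_D(4)[OF A] AA_D(4)[OF B] by auto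
  have a1: "a \<in> {1..n}" using AA_D(2)[OF A a(1)] by auto
  have "n + 1 - a \<in> B - A"
    using AA_complement_mem[OF n B a1 a(2)] AA_D(3)[OF A a(1), of "n + 1 - a"] a1 by auto
  then have "a < n + 1 - a" using a(3) by blast
  then show ?thesis using a n by (intro bexI[of _ a]) auto
qed

lemma lex_less_AA_large_index:
  assumes n: "n = 2 * m" and A: "A \<in> AA n" and B: "B \<in> AA n" and "lex_less B A"
  shows "\<exists>c\<in>A - B. m < c"
proof -
  obtain c where c: "c \<in> B" "c \<notin> A" "c \<le> m" using lex_less_AA_small_index[OF n B A assms(4)]
    by blast
  have c1: "c \<in> {1..n}" using AA_D(2)[OF B c(1)] by auto
  have "n + 1 - c \<in> A - B"
    using AA_complement_mem[OF n A c1 c(2)] AA_D(3)[OF B c(1), of "n + 1 - c"] c1 by auto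
  then show ?thesis using c(3) n by (intro bexI[of _ "n + 1 - c"]) auto
qed

lemma lex_less_swap_index:
  assumes n: "n = 2 * m" and A: "A \<in> AA n" and c: "c \<in> A"
  shows "m < c \<Longrightarrow> lex_less (swap_index n A c) A"
    and "c \<le> m \<Longrightarrow> lex_less A (swap_index n A c)"
proof -
  let ?B = "swap_index n A c"
  have c1: "1 \<le> c" "c \<le> n" using AA_D(2)[OF A c] by auto
  have nc: "n + 1 - c \<notin> A" using AA_D(3)[OF A c, of "n + 1 - c"] c1 by auto
  have B: "?B \<in> AA n" using swap_index_AA[OF assms] .
  have fin: "finite A" "finite ?B" using AA_D(1) A B by blast+
  have cd: "card ?B = card A" using AA_D(4) A B by metis
  have d: "?B - A = {n + 1 - c}" "A - ?B = {c}" using nc c unfolding swap_index_def by auto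
  show "lex_less ?B A" if "m < c"
    using that n c1 lex_less_iff[OF fin(2) fin(1) cd] d by auto
  show "lex_less A ?B" if "c \<le> m"
    using that n c1 lex_less_iff[OF fin(1) fin(2) cd[symmetric]] d by auto
qed

section \<open>Facets of Delta' are paths\<close>

lemma gen_complementaryI:
  assumes "p \<in> V n" "q \<in> V n" "a \<in> {fst p, snd p}" "b \<in> {fst q, snd q}" "a + b = n + 1"
  shows "gen n p q"
  using assms unfolding gen_def V_def by (auto split: prod.splits)

lemma gen_lessI:
  assumes "p \<in> V n" "q \<in> V n" "fst p < fst q" "snd p < snd q"
  shows "gen n p q"
  using assms unfolding gen_def V_def by (auto split: prod.splits)

lemma path_set_face:
  assumes A: "A \<in> AA n" and ps: "is_path A ps"
  shows "set ps \<in> Delta' n"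
proof -
  have "set ps \<subseteq> V n"
    using is_pathD(4)[OF ps] AA_D(2,3)[OF A] unfolding T_def V_def by fastforce
  moreover have "\<not> gen n (ps!a) (ps!b)" if ab: "a < length ps" "b < length ps" for a b
  proof -
    have "\<not> (fst (ps!a) < fst (ps!b) \<and> snd (ps!a) < snd (ps!b))"
      using path_nth_mono[OF ps, of a b] path_nth_mono[OF ps, of b a] ab by (cases "a \<le> b") auto
    moreover have "x + y \<noteq> n + 1" if "x \<in> {fst (ps!a), snd (ps!a)}" "y \<in> {fst (ps!b), snd (ps!b)}"
      for x y using that AA_D(3)[OF A] path_nth_in_T[OF ps] ab by auto
    ultimately show ?thesis unfolding gen_def by (auto split: prod.splits)
  qed
  then have "\<not> gen n p q" if "p \<in> set ps" "q \<in> set ps" for p q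
    using that by (metis in_set_conv_nth)
  ultimately show ?thesis unfolding Delta'_def by blast
qed

text \<open>An index outside A has its complement in A, which some point of the path uses.\<close>
lemma face_containing_path_indices:
  assumes n: "n = 2 * m" and A: "A \<in> AA n" and ps: "is_path A ps"
    and G: "G \<in> Delta' n" "set ps \<subseteq> G" and y: "y \<in> G" "z \<in> {fst y, snd y}"
  shows "z \<in> A"
proof (rule ccontr)
  assume "z \<notin> A"
  have yV: "y \<in> V n" using G(1) y(1) unfolding Delta'_def by auto
  then have z1: "z \<in> {1..n}" using y(2) unfolding V_def by auto
  obtain k where k: "k < length ps" "fst (ps!k) = n + 1 - z \<or> snd (ps!k) = n + 1 - z"
    using path_covers_index[OF ps AA_D(1)[OF A] AA_complement_mem[OF n A z1 \<open>z \<notin> A\<close>]] by blast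
  have pk: "ps!k \<in> G" "ps!k \<in> V n" using G k(1) nth_mem unfolding Delta'_def by blast+
  have "n + 1 - z \<in> {fst (ps!k), snd (ps!k)}" using k(2) by auto
  then have "gen n y (ps!k)" by (rule gen_complementaryI[OF yV pk(2) y(2)]) (use z1 in simp)
  moreover have "y \<noteq> ps!k"
  proof
    assume "y = ps!k"
    then have "n + 1 - z \<in> {fst y, snd y}" using k by auto
    moreover have "n + 1 - z \<noteq> z" using z1 n by presburger
    moreover have "fst y + snd y \<noteq> n + 1" using yV unfolding V_def by auto
    ultimately show False using y(2) z1 by auto
  qed
  ultimately show False using G(1) y(1) pk(1) unfolding Delta'_def by blast
qed

lemma path_point_strictly_comparable:
  assumes ps: "is_path A ps" and "finite A" and ij: "i \<in> A" "j \<in> A" "i \<le> j" "(i, j) \<notin> set ps"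
  shows "\<exists>p\<in>set ps. (fst p < i \<and> snd p < j) \<or> (i < fst p \<and> j < snd p)"
proof -
  obtain k where k: "k < length ps" "fst (ps!k) \<le> i" "j \<le> snd (ps!k)"
    and last: "Suc k < length ps \<Longrightarrow> \<not> (fst (ps!Suc k) \<le> i \<and> j \<le> snd (ps!Suc k))"
    using path_last_enclosing[OF ps assms(2) ij(1,2)] by blast
  have ne: "ps!k \<noteq> (i, j)" using k(1) ij(4) nth_mem by metis
  have "Suc k < length ps"
  proof (rule ccontr)
    assume "\<not> Suc k < length ps"
    then have "fst (ps!k) = snd (ps!k)" using path_last_diag[OF ps] k(1)
      by (metis Suc_lessI diff_Suc_1)
    then show False using k ne ij(3) by (auto simp: prod_eq_iff)
  qed
  moreover from ps this
  have "(fst (ps!Suc k) < i \<and> snd (ps!Suc k) < j) \<or> (i < fst (ps!Suc k) \<and> j < snd (ps!Suc k))"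
  proof (cases rule: path_step_cases)
    case horiz
    then have lt: "snd (ps!Suc k) < j" using last k(2) \<open>Suc k < length ps\<close> by auto
    then have "\<not> j < snd (ps!k)" using horiz(3) ij(2) by blast
    then have "fst (ps!k) \<noteq> i" using ne k(3) by (auto simp: prod_eq_iff)
    then show ?thesis using horiz(1) lt k(2) by auto
  next
    case vert
    then have lt: "i < fst (ps!Suc k)" using last k(3) \<open>Suc k < length ps\<close> by auto
    then have "\<not> fst (ps!k) < i" using vert(3) ij(1) by blast
    then have "j \<noteq> snd (ps!k)" using ne k(2) by (auto simp: prod_eq_iff)
    then show ?thesis using vert(1) lt k(3) by auto
  qed
  ultimately show ?thesis using nth_mem by blast
qed

lemma path_set_facet:
  assumes n: "n = 2 * m" and A: "A \<in> AA n" and ps: "is_path A ps"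
  shows "set ps \<in> facets (Delta' n)"
proof -
  have "y \<in> set ps" if G: "G \<in> Delta' n" "set ps \<subseteq> G" and y: "y \<in> G" for G y
  proof (rule ccontr)
    assume y_off: "y \<notin> set ps"
    have yV: "y \<in> V n" using G(1) y unfolding Delta'_def by auto
    have inA: "fst y \<in> A" "snd y \<in> A" using face_containing_path_indices[OF n A ps G y] by auto
    have "fst y \<le> snd y" using yV unfolding V_def by auto
    moreover have "(fst y, snd y) \<notin> set ps" using y_off by simp
    ultimately obtain p where p: "p \<in> set ps"
      "(fst p < fst y \<and> snd p < snd y) \<or> (fst y < fst p \<and> snd y < snd p)"
      using path_point_strictly_comparable[OF ps AA_D(1)[OF A] inA] by blast
    have pG: "p \<in> G" using G(2) p(1) by blast
    then have "p \<in> V n" using G(1) unfolding Delta'_def by blast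
    then have "gen n p y \<or> gen n y p" using p(2) gen_lessI yV by blast
    moreover have "\<not> gen n p y" "\<not> gen n y p"
      using G(1) pG y p(1) y_off unfolding Delta'_def by auto
    ultimately show False by blast
  qed
  then show ?thesis using path_set_face[OF A ps] unfolding facets_def by blast
qed

lemma path_set_facet_DeltaA:
  assumes "n = 2 * m" "A \<in> AA n" "is_path A ps"
  shows "set ps \<in> facets (DeltaA n A)"
  using path_set_facet[OF assms] is_pathD(4)[OF assms(3)] unfolding facets_def DeltaA_def by auto

definition path_from :: "nat set \<Rightarrow> pos \<Rightarrow> pos list \<Rightarrow> bool" where
  "path_from A p ps = (ps \<noteq> [] \<and> hd ps = p \<and> fst (last ps) = snd (last ps) \<and> set ps \<subseteq> T A \<and>
     (\<forall>k. Suc k < length ps \<longrightarrow> hstep A (ps ! k) (ps ! Suc k) \<or> vstep A (ps ! k) (ps ! Suc k)))"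

lemma path_from_Cons:
  assumes "path_from A q ps" "p \<in> T A" "hstep A p q \<or> vstep A p q"
  shows "path_from A p (p # ps)"
proof -
  have "ps \<noteq> []" "ps!0 = q" using assms(1) unfolding path_from_def by (auto simp: hd_conv_nth)
  moreover have "hstep A ((p#ps)!k) ((p#ps)!Suc k) \<or> vstep A ((p#ps)!k) ((p#ps)!Suc k)"
    if "Suc k < length (p # ps)" for k
    using that assms \<open>ps \<noteq> []\<close> \<open>ps!0 = q\<close> unfolding path_from_def
    by (cases k) (auto simp: hd_conv_nth)
  ultimately show ?thesis using assms unfolding path_from_def by auto
qed

definition chain :: "pos set \<Rightarrow> bool" where
  "chain S = (\<forall>q\<in>S. \<forall>q'\<in>S. (fst q \<le> fst q' \<and> snd q' \<le> snd q) \<or> (fst q' \<le> fst q \<and> snd q \<le> snd q'))"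

text \<open>A point of S other than (r, c) in column c lies below row r, and then, S being a chain,
  so does all of S - {(r, c)}.\<close>
lemma chain_step_down:
  assumes "finite A" and p: "(r, c) \<in> T A" and S: "S \<subseteq> T A" "chain S"
    "\<forall>q\<in>S. r \<le> fst q \<and> snd q \<le> c" and q0: "q0 \<in> S - {(r, c)}" "snd q0 = c"
  obtains r' where "vstep A (r, c) (r', c)" "(r', c) \<in> T A"
    "\<forall>q\<in>S - {(r, c)}. r' \<le> fst q \<and> snd q \<le> c"
proof -
  have "r < fst q0" using q0 S(3) by (auto simp: prod_eq_iff)
  define r' where "r' = Min {a\<in>A. r < a}"
  have fin: "finite {a\<in>A. r < a}" "{a\<in>A. r < a} \<noteq> {}"
    using assms(1) q0 S(1) \<open>r < fst q0\<close> unfolding T_def by auto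
  have r': "r' \<in> A" "r < r'" "\<And>a. a \<in> A \<Longrightarrow> r < a \<Longrightarrow> r' \<le> a"
    using Min_in[OF fin] Min_le[OF fin(1)] unfolding r'_def by auto
  have "r' \<le> fst q0" "fst q0 \<le> snd q0" using r'(3) q0 S(1) \<open>r < fst q0\<close> unfolding T_def by auto
  then have "(r', c) \<in> T A" using r' p q0(2) unfolding T_def by auto
  moreover have "vstep A (r, c) (r', c)" unfolding vstep_def using r' by force
  moreover have "r' \<le> fst q \<and> snd q \<le> c" if q: "q \<in> S - {(r, c)}" for q
  proof -
    have "(fst q \<le> fst q0 \<and> snd q0 \<le> snd q) \<or> (fst q0 \<le> fst q \<and> snd q \<le> snd q0)"
      using S(2) q q0(1) unfolding chain_def by blast
    then have "r < fst q" using q q0 S(3) \<open>r < fst q0\<close> by (cases q) force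
    moreover have "fst q \<in> A" using q S(1) unfolding T_def by auto
    ultimately show ?thesis using r'(3) q S(3) by auto
  qed
  ultimately show thesis using that by blast
qed

lemma chain_step_left:
  assumes "finite A" and p: "(r, c) \<in> T A" "r < c" and S: "S \<subseteq> T A"
    "\<forall>q\<in>S. r \<le> fst q \<and> snd q \<le> c" and off: "\<forall>q\<in>S - {(r, c)}. snd q \<noteq> c"
  obtains c' where "hstep A (r, c) (r, c')" "(r, c') \<in> T A"
    "\<forall>q\<in>S - {(r, c)}. r \<le> fst q \<and> snd q \<le> c'"
proof -
  define c' where "c' = Max {a\<in>A. a < c}"
  have fin: "finite {a\<in>A. a < c}" "{a\<in>A. a < c} \<noteq> {}" using assms(1) p unfolding T_def by auto
  have c': "c' \<in> A" "c' < c" "r \<le> c'" "\<And>a. a \<in> A \<Longrightarrow> a < c \<Longrightarrow> a \<le> c'"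
    using Max_in[OF fin] Max_ge[OF fin(1)] p unfolding c'_def T_def by auto
  have "r \<le> fst q \<and> snd q \<le> c'" if q: "q \<in> S - {(r, c)}" for q
  proof -
    have "snd q \<in> A" "snd q \<noteq> c" using q S(1) off unfolding T_def by auto
    then show ?thesis using c'(4)[of "snd q"] S(2) q by auto
  qed
  moreover have "hstep A (r, c) (r, c')" unfolding hstep_def using c' by force
  moreover have "(r, c') \<in> T A" using c' p unfolding T_def by auto
  ultimately show thesis using that by blast
qed

lemma chain_next_step:
  assumes "finite A" and p: "(r, c) \<in> T A" "r < c" and S: "S \<subseteq> T A" "chain S"
    "\<forall>q\<in>S. r \<le> fst q \<and> snd q \<le> c"
  obtains p' where "hstep A (r, c) p' \<or> vstep A (r, c) p'" "p' \<in> T A"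
    "\<forall>q\<in>S - {(r, c)}. fst p' \<le> fst q \<and> snd q \<le> snd p'"
proof (cases "\<exists>q\<in>S - {(r, c)}. snd q = c")
  case True
  then obtain q0 where "q0 \<in> S - {(r, c)}" "snd q0 = c" by blast
  from chain_step_down[OF assms(1) p(1) S this] show thesis using that by (metis fst_conv snd_conv)
next
  case False
  from chain_step_left[OF assms(1) p S(1,3)] False show thesis using that
    by (metis fst_conv snd_conv)
qed

lemma path_from_through_chain:
  assumes "finite A" "p \<in> T A" "S \<subseteq> T A" "chain S" "\<forall>q\<in>S. fst p \<le> fst q \<and> snd q \<le> snd p"
  shows "\<exists>ps. path_from A p ps \<and> S \<subseteq> set ps"
  using assms(2-5)
proof (induction "snd p - fst p" arbitrary: p S rule: less_induct)
  case less
  obtain r c where p: "p = (r, c)" by (cases p)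
  show ?case
  proof (cases "r < c")
    case True
    obtain p' where p': "hstep A p p' \<or> vstep A p p'" "p' \<in> T A"
      "\<forall>q\<in>S - {p}. fst p' \<le> fst q \<and> snd q \<le> snd p'"
      using chain_next_step[OF assms(1) less.prems(1)[unfolded p] True less.prems(2,3)]
        less.prems(4) p
      by auto
    have "snd p' - fst p' < snd p - fst p" using p' True p unfolding hstep_def vstep_def T_def
      by auto
    moreover have "chain (S - {p})" using less.prems(3) unfolding chain_def by blast
    ultimately obtain ps where "path_from A p' ps" "S - {p} \<subseteq> set ps"
      using less.hyps[of p' "S - {p}"] p'(2,3) less.prems(2) by blast
    then show ?thesis using path_from_Cons[OF _ less.prems(1) p'(1)]
      by (intro exI[of _ "p # ps"]) auto
  next
    case False
    have "r = c" using less.prems(1) False p unfolding T_def by auto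
    have "q = p" if "q \<in> S" for q
    proof -
      have "fst q \<le> snd q" using that less.prems(2) unfolding T_def by auto
      then show ?thesis using that less.prems(4) p \<open>r = c\<close> by (cases q) auto
    qed
    then have "S \<subseteq> {p}" by blast
    then show ?thesis using less.prems(1) p \<open>r = c\<close> unfolding path_from_def
      by (intro exI[of _ "[p]"]) auto
  qed
qed

lemma face_chain:
  assumes "F \<in> Delta' n"
  shows "chain F"
  unfolding chain_def
proof (intro ballI)
  fix q q' assume q: "q \<in> F" "q' \<in> F"
  have V: "q \<in> V n" "q' \<in> V n" using assms q unfolding Delta'_def by auto
  show "(fst q \<le> fst q' \<and> snd q' \<le> snd q) \<or> (fst q' \<le> fst q \<and> snd q \<le> snd q')"
  proof (cases "q = q'")
    case False
    then have "\<not> gen n q q'" "\<not> gen n q' q" using assms q unfolding Delta'_def by auto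
    then show ?thesis using gen_lessI[OF V] gen_lessI[OF V(2,1)] by fastforce
  qed simp
qed

lemma face_indices_pairfree:
  assumes n: "n = 2 * m" and F: "F \<in> Delta' n"
    and x: "p \<in> F" "x \<in> {fst p, snd p}" and y: "q \<in> F" "y \<in> {fst q, snd q}"
  shows "x + y \<noteq> n + 1"
proof
  assume s: "x + y = n + 1"
  have V: "p \<in> V n" "q \<in> V n" using F x(1) y(1) unfolding Delta'_def by auto
  show False
  proof (cases "p = q")
    case True
    have "fst p + snd p \<noteq> n + 1" using V(1) unfolding V_def by auto
    moreover have "x \<noteq> y" using s n by presburger
    ultimately show False using x y True s by auto
  next
    case False
    then show False using gen_complementaryI[OF V x(2) y(2) s] F x(1) y(1) unfolding Delta'_def
      by blast
  qed
qed

text \<open>Complete the indices used by a face to a member of A by adding the smaller index of every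
  complementary pair that is not yet used.\<close>
lemma face_in_T_AA:
  assumes n: "n = 2 * m" and F: "F \<in> Delta' n"
  shows "\<exists>A\<in>AA n. F \<subseteq> T A"
proof -
  have FV: "F \<subseteq> V n" using F unfolding Delta'_def by auto
  define I where "I = fst ` F \<union> snd ` F"
  have I1: "I \<subseteq> {1..n}" using FV unfolding I_def V_def by auto
  have Ic: "x + y \<noteq> n + 1" if "x \<in> I" "y \<in> I" for x y
    using that face_indices_pairfree[OF n F] unfolding I_def by blast
  define A where "A = {a\<in>{1..n}. a \<in> I \<or> (a \<le> m \<and> n + 1 - a \<notin> I)}"
  have Asub: "A \<subseteq> {1..n}" unfolding A_def by auto
  have Ac: "\<forall>i\<in>A. \<forall>j\<in>A. i + j \<noteq> n + 1"
  proof (intro ballI notI)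
    fix i j assume ij: "i \<in> A" "j \<in> A" and s: "i + j = n + 1"
    then have "j = n + 1 - i" "i = n + 1 - j" by auto
    then show False using ij Ic s n unfolding A_def by auto
  qed
  have "\<forall>x\<in>{1..n}. x \<in> A \<or> n + 1 - x \<in> A" unfolding A_def using n by auto
  then have "A \<in> AA n"
    using card_pairfree_eq_iff[OF n Asub Ac] Asub Ac n unfolding AA_def by auto
  moreover have "F \<subseteq> T A"
  proof
    fix p assume "p \<in> F"
    then have "fst p \<in> I" "snd p \<in> I" "fst p \<le> snd p" using FV unfolding I_def V_def by auto
    then show "p \<in> T A" using I1 unfolding T_def A_def by (cases p) auto
  qed
  ultimately show ?thesis by blast
qed

lemma facet_is_path:
  assumes n: "n = 2 * m" and m: "0 < m" and F: "F \<in> facets (Delta' n)"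
  shows "\<exists>A ps. A \<in> AA n \<and> is_path A ps \<and> set ps = F"
proof -
  have Fd: "F \<in> Delta' n" using F unfolding facets_def by blast
  obtain A where A: "A \<in> AA n" "F \<subseteq> T A" using face_in_T_AA[OF n Fd] by blast
  have fin: "finite A" and ne: "A \<noteq> {}" using AA_D(1,4)[OF A(1)] n m by auto
  have top: "(Min A, Max A) \<in> T A" and "\<forall>q\<in>F. Min A \<le> fst q \<and> snd q \<le> Max A"
    using A(2) fin ne unfolding T_def by auto
  then obtain ps where "path_from A (Min A, Max A) ps" and sub: "F \<subseteq> set ps"
    using path_from_through_chain[OF fin top A(2) face_chain[OF Fd]] by auto
  then have ps: "is_path A ps" "F \<subseteq> set ps" using sub unfolding path_from_def is_path_def by auto
  then have "set ps = F" using F path_set_face[OF A(1) ps(1)] unfolding facets_def by blast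
  then show ?thesis using A(1) ps by blast
qed

section \<open>Turns and indices\<close>

lemma turn_pos:
  "left_turn ps k \<or> right_turn ps k \<Longrightarrow> 0 < k \<and> k < length ps"
  unfolding left_turn_def right_turn_def by auto

lemma not_left_and_right_turn:
  assumes ps: "is_path A ps" and "left_turn ps k" "right_turn ps k"
  shows False
proof -
  have k: "0 < k" "k < length ps" using turn_pos assms(2) by blast+
  have "ps!(k-1) = ps!k"
    using assms(2,3) unfolding left_turn_def right_turn_def horiz_def vert_def
      by (auto simp: prod_eq_iff)
  then show False using path_nth_inj[OF ps, of "k-1" k] k by simp
qed

lemma turn_not_index:
  assumes ps: "is_path A ps" and "left_turn ps k \<or> right_turn ps k"
  shows "\<not> is_index ps k c"
proof
  assume ix: "is_index ps k c"
  have k: "0 < k" "k < length ps" using turn_pos assms(2) by blast+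
  have "fst (ps!(k-1)) \<noteq> c" "snd (ps!(k-1)) \<noteq> c" using ix k unfolding is_index_def by auto
  moreover have "fst (ps!Suc k) \<noteq> c" "snd (ps!Suc k) \<noteq> c" if "Suc k < length ps"
    using ix that unfolding is_index_def by auto
  moreover have "c = fst (ps!k) \<or> c = snd (ps!k)" using ix unfolding is_index_def by auto
  moreover have "k = length ps - 1 \<Longrightarrow> fst (ps!k) = snd (ps!k)" using path_last_diag[OF ps] by simp
  ultimately show False using assms(2) unfolding left_turn_def right_turn_def horiz_def vert_def
    by auto
qed

lemma last_is_turn:
  assumes ps: "is_path A ps" and "2 \<le> length ps"
  shows "left_turn ps (length ps - 1) \<or> right_turn ps (length ps - 1)"
proof -
  have j: "length ps - 1 = Suc (length ps - 2)" "Suc (length ps - 2) < length ps" using assms(2)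
    by auto
  then show ?thesis using path_step_row_or_col[OF ps j(2)] assms(2)
    unfolding left_turn_def right_turn_def horiz_def vert_def by auto
qed

lemma isolated_0: "2 \<le> length ps \<Longrightarrow> isolated ps 0"
  unfolding isolated_def left_turn_def right_turn_def by auto

lemma isolated_not_last:
  assumes ps: "is_path A ps" and "isolated ps k" "2 \<le> length ps"
  shows "Suc k < length ps"
  using last_is_turn[OF ps assms(3)] assms(2) unfolding isolated_def
  by (metis Suc_lessI diff_Suc_1)

lemma isolated_straight:
  assumes ps: "is_path A ps" and iso: "isolated ps (Suc j)" and k: "Suc (Suc j) < length ps"
  shows "(fst (ps!j) = fst (ps!Suc j) \<and> fst (ps!Suc (Suc j)) = fst (ps!Suc j)) \<or>
         (snd (ps!j) = snd (ps!Suc j) \<and> snd (ps!Suc (Suc j)) = snd (ps!Suc j))"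
proof -
  have "\<not> (horiz (ps!j) (ps!Suc j) \<and> vert (ps!Suc j) (ps!Suc (Suc j)))"
    "\<not> (vert (ps!j) (ps!Suc j) \<and> horiz (ps!Suc j) (ps!Suc (Suc j)))"
    using iso k unfolding isolated_def left_turn_def right_turn_def by auto
  then show ?thesis using path_step_row_or_col[OF ps, of j] path_step_row_or_col[OF ps k] k
    unfolding horiz_def vert_def by auto
qed

lemma is_index_col:
  assumes ps: "is_path A ps" and k: "Suc k < length ps"
    and out: "fst (ps!Suc k) = fst (ps!k)" and inn: "k = 0 \<or> fst (ps!(k-1)) = fst (ps!k)"
  shows "is_index ps k (snd (ps!k))"
proof -
  have "fst (ps!l) \<noteq> snd (ps!k) \<and> snd (ps!l) \<noteq> snd (ps!k)" if l: "l < length ps" "l \<noteq> k" for l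
  proof -
    have s1: "snd (ps!Suc k) < snd (ps!k)" using path_hstepI[OF ps k out] unfolding hstep_def
      by simp
    show "fst (ps!l) \<noteq> snd (ps!k) \<and> snd (ps!l) \<noteq> snd (ps!k)"
    proof (cases "l < k")
      case True
      then have "hstep A (ps!(k-1)) (ps!k)" using path_hstepI[OF ps, of "k-1"] inn k by simp
      then have "snd (ps!k) < snd (ps!(k-1))" unfolding hstep_def by simp
      moreover have "snd (ps!(k-1)) \<le> snd (ps!l)" "fst (ps!l) \<le> fst (ps!k)"
        using path_nth_mono[OF ps, of l "k-1"] path_nth_mono[OF ps, of l k] True k by auto
      moreover have "fst (ps!Suc k) \<le> snd (ps!Suc k)" using path_nth_in_T[OF ps k] by simp
      ultimately show ?thesis using s1 out by auto
    next
      case False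
      then have "snd (ps!l) \<le> snd (ps!Suc k)" using path_nth_mono[OF ps, of "Suc k" l] l by auto
      moreover have "fst (ps!l) \<le> snd (ps!l)" using path_nth_in_T[OF ps l(1)] by simp
      ultimately show ?thesis using s1 by auto
    qed
  qed
  then show ?thesis unfolding is_index_def by simp
qed

lemma is_index_row:
  assumes ps: "is_path A ps" and k: "Suc k < length ps"
    and out: "snd (ps!Suc k) = snd (ps!k)" and inn: "k = 0 \<or> snd (ps!(k-1)) = snd (ps!k)"
  shows "is_index ps k (fst (ps!k))"
proof -
  have "fst (ps!l) \<noteq> fst (ps!k) \<and> snd (ps!l) \<noteq> fst (ps!k)" if l: "l < length ps" "l \<noteq> k" for l
  proof -
    have s1: "fst (ps!k) < fst (ps!Suc k)" using path_vstepI[OF ps k out] unfolding vstep_def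
      by simp
    show "fst (ps!l) \<noteq> fst (ps!k) \<and> snd (ps!l) \<noteq> fst (ps!k)"
    proof (cases "l < k")
      case True
      then have "vstep A (ps!(k-1)) (ps!k)" using path_vstepI[OF ps, of "k-1"] inn k by simp
      then have "fst (ps!(k-1)) < fst (ps!k)" unfolding vstep_def by simp
      moreover have "fst (ps!l) \<le> fst (ps!(k-1))" "snd (ps!k) \<le> snd (ps!l)"
        using path_nth_mono[OF ps, of l "k-1"] path_nth_mono[OF ps, of l k] True k by auto
      moreover have "fst (ps!Suc k) \<le> snd (ps!Suc k)" using path_nth_in_T[OF ps k] by simp
      ultimately show ?thesis using s1 out by auto
    next
      case False
      then have "fst (ps!Suc k) \<le> fst (ps!l)" using path_nth_mono[OF ps, of "Suc k" l] l by auto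
      moreover have "fst (ps!l) \<le> snd (ps!l)" using path_nth_in_T[OF ps l(1)] by simp
      ultimately show ?thesis using s1 by auto
    qed
  qed
  then show ?thesis unfolding is_index_def by simp
qed

lemma is_index_unique:
  assumes ps: "is_path A ps" and k: "k < length ps" and "is_index ps k c" "is_index ps k c'"
  shows "c = c'"
proof (cases "length ps = 1")
  case True
  then have "fst (ps!k) = snd (ps!k)" using path_last_diag[OF ps] k by simp
  then show ?thesis using assms(3,4) unfolding is_index_def by auto
next
  case False
  obtain l where l: "l < length ps" "l \<noteq> k" "fst (ps!l) = fst (ps!k) \<or> snd (ps!l) = snd (ps!k)"
  proof (cases k)
    case 0
    then show thesis using that[of 1] path_step_row_or_col[OF ps, of 0] False k by auto
  next
    case (Suc j)
    then show thesis using that[of j] path_step_row_or_col[OF ps, of j] k by auto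
  qed
  then have "c \<noteq> fst (ps!l)" "c \<noteq> snd (ps!l)" "c' \<noteq> fst (ps!l)" "c' \<noteq> snd (ps!l)"
    "c \<in> {fst (ps!k), snd (ps!k)}" "c' \<in> {fst (ps!k), snd (ps!k)}"
    using assms(3,4) unfolding is_index_def by auto
  then show ?thesis using l(3) by auto
qed

lemma isolated_has_index:
  assumes ps: "is_path A ps" and iso: "isolated ps k"
  shows "\<exists>c. is_index ps k c"
proof -
  have k: "k < length ps" using iso unfolding isolated_def by simp
  show ?thesis
  proof (cases "length ps = 1")
    case True
    then show ?thesis using k unfolding is_index_def by auto
  next
    case False
    then have kl: "Suc k < length ps" using isolated_not_last[OF ps iso] k by simp
    show ?thesis
    proof (cases k)
      case 0
      then show ?thesis
        using is_index_col[OF ps kl] is_index_row[OF ps kl] path_step_row_or_col[OF ps kl]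
        by blast
    next
      case (Suc j)
      then have "isolated ps (Suc j)" "Suc (Suc j) < length ps" using iso kl by simp_all
      from isolated_straight[OF ps this] show ?thesis
        using is_index_col[OF ps kl] is_index_row[OF ps kl] Suc by auto
    qed
  qed
qed

lemma nth_in_minus_list_iff:
  assumes ps: "is_path A ps" and k: "k < length ps"
  shows "ps!k \<in> minus_list m ps \<longleftrightarrow> right_turn ps k \<or> (isolated ps k \<and> (\<exists>c. is_index ps k c \<and> m < c))"
  using path_nth_eq_iff[OF ps] k unfolding minus_list_def by auto

lemma nth_notin_minus_list_iff:
  assumes ps: "is_path A ps" and k: "k < length ps"
  shows "ps!k \<notin> minus_list m ps \<longleftrightarrow> left_turn ps k \<or> (isolated ps k \<and> (\<exists>c. is_index ps k c \<and> c \<le> m))"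
proof -
  have "(\<exists>c. is_index ps k c \<and> m < c) \<longleftrightarrow> \<not> (\<exists>c. is_index ps k c \<and> c \<le> m)"
    if iso: "isolated ps k"
  proof -
    obtain c where "is_index ps k c" using isolated_has_index[OF ps iso] by blast
    then have "is_index ps k c' \<longleftrightarrow> c' = c" for c' using is_index_unique[OF ps k] by blast
    then show ?thesis by auto
  qed
  then show ?thesis using nth_in_minus_list_iff[OF ps k, of m] not_left_and_right_turn[OF ps]
    k unfolding isolated_def by blast
qed

lemma column_run_ends_in_right_turn:
  assumes ps: "is_path A ps" and i: "Suc i < length ps" "snd (ps!Suc i) = snd (ps!i)"
  shows "\<exists>k. Suc i \<le> k \<and> k < length ps \<and> snd (ps!k) = snd (ps!i) \<and> right_turn ps k"
proof -
  define R where "R = {k. k < length ps \<and> snd (ps!k) = snd (ps!i)}"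
  have iR: "Suc i \<in> R" and fin: "finite R" using i unfolding R_def by auto
  define k where "k = Max R"
  have "R \<noteq> {}" using iR by blast
  then have k: "k \<in> R" "Suc i \<le> k" "Suc k \<notin> R"
    using Max_in[OF fin] Max_ge[OF fin iR] Max_ge[OF fin, of "Suc k"] unfolding k_def by auto
  have kl: "k < length ps" "snd (ps!k) = snd (ps!i)" using k unfolding R_def by auto
  have "snd (ps!k) \<le> snd (ps!(k-1))" "snd (ps!(k-1)) \<le> snd (ps!i)"
    using path_nth_mono[OF ps, of "k-1" k] path_nth_mono[OF ps, of i "k-1"] k kl(1)
    by auto
  then have vin: "vert (ps!(k-1)) (ps!k)" using kl(2) unfolding vert_def by simp
  have "right_turn ps k"
  proof (cases "Suc k < length ps")
    case True
    then have "snd (ps!Suc k) \<noteq> snd (ps!k)" using k(3) kl unfolding R_def by auto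
    then show ?thesis using path_step_row_or_col[OF ps True] vin True k(2)
      unfolding right_turn_def horiz_def by auto
  next
    case False
    then show ?thesis using vin kl(1) k(2) unfolding right_turn_def by auto
  qed
  then show ?thesis using k(2) kl by blast
qed

lemma row_run_ends_in_left_turn:
  assumes ps: "is_path A ps" and i: "Suc i < length ps" "fst (ps!Suc i) = fst (ps!i)"
  shows "\<exists>k. Suc i \<le> k \<and> k < length ps \<and> fst (ps!k) = fst (ps!i) \<and> left_turn ps k"
proof -
  define R where "R = {k. k < length ps \<and> fst (ps!k) = fst (ps!i)}"
  have iR: "Suc i \<in> R" and fin: "finite R" using i unfolding R_def by auto
  define k where "k = Max R"
  have "R \<noteq> {}" using iR by blast
  then have k: "k \<in> R" "Suc i \<le> k" "Suc k \<notin> R"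
    using Max_in[OF fin] Max_ge[OF fin iR] Max_ge[OF fin, of "Suc k"] unfolding k_def by auto
  have kl: "k < length ps" "fst (ps!k) = fst (ps!i)" using k unfolding R_def by auto
  have "fst (ps!(k-1)) \<le> fst (ps!k)" "fst (ps!i) \<le> fst (ps!(k-1))"
    using path_nth_mono[OF ps, of "k-1" k] path_nth_mono[OF ps, of i "k-1"] k kl(1)
    by auto
  then have hin: "horiz (ps!(k-1)) (ps!k)" using kl(2) unfolding horiz_def by simp
  have "left_turn ps k"
  proof (cases "Suc k < length ps")
    case True
    then have "fst (ps!Suc k) \<noteq> fst (ps!k)" using k(3) kl unfolding R_def by auto
    then show ?thesis using path_step_row_or_col[OF ps True] hin True k(2)
      unfolding left_turn_def vert_def by auto
  next
    case False
    then show ?thesis using hin kl(1) k(2) unfolding left_turn_def by auto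
  qed
  then show ?thesis using k(2) kl by blast
qed

lemma row_run_starts_in_right_turn:
  assumes ps: "is_path A ps" and i: "Suc i < length ps" "fst (ps!Suc i) = fst (ps!i)"
  shows "\<exists>k\<le>i. fst (ps!k) = fst (ps!i) \<and>
           (right_turn ps k \<or> (k = 0 \<and> isolated ps 0 \<and> is_index ps 0 (Max A)))"
proof -
  define R where "R = {k. k < length ps \<and> fst (ps!k) = fst (ps!i)}"
  have iR: "i \<in> R" and fin: "finite R" using i unfolding R_def by auto
  define k where "k = Min R"
  have "R \<noteq> {}" using iR by blast
  then have k: "k \<in> R" "k \<le> i" "\<And>j. Suc j = k \<Longrightarrow> j \<notin> R"
    using Min_in[OF fin] Min_le[OF fin iR] Min_le[OF fin] unfolding k_def by force+
  have kl: "Suc k < length ps" "fst (ps!k) = fst (ps!i)" using k(1,2) i(1) by (simp_all add: R_def)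
  have "fst (ps!k) \<le> fst (ps!Suc k)" "fst (ps!Suc k) \<le> fst (ps!Suc i)"
    using path_nth_mono[OF ps, of k "Suc k"] path_nth_mono[OF ps, of "Suc k"
      "Suc i"] k(2) i(1) kl(1)
    by auto
  then have hout: "fst (ps!Suc k) = fst (ps!k)" using kl(2) i(2) by simp
  have "right_turn ps k \<or> (k = 0 \<and> isolated ps 0 \<and> is_index ps 0 (Max A))"
  proof (cases k)
    case 0
    then show ?thesis using isolated_0 is_index_col[OF ps kl(1) hout] path_nth_0[OF ps] kl(1)
      by simp
  next
    case (Suc j)
    then have "fst (ps!j) \<noteq> fst (ps!k)" using k(3) kl unfolding R_def by auto
    then have "snd (ps!j) = snd (ps!k)" using path_step_row_or_col[OF ps, of j] kl(1) Suc by auto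
    then show ?thesis using hout kl(1) Suc unfolding right_turn_def horiz_def vert_def by auto
  qed
  then show ?thesis using k(2) kl(2) by blast
qed

lemma column_run_starts_in_left_turn:
  assumes ps: "is_path A ps" and i: "Suc i < length ps" "snd (ps!Suc i) = snd (ps!i)"
  shows "\<exists>k\<le>i. snd (ps!k) = snd (ps!i) \<and>
           (left_turn ps k \<or> (k = 0 \<and> isolated ps 0 \<and> is_index ps 0 (Min A)))"
proof -
  define R where "R = {k. k < length ps \<and> snd (ps!k) = snd (ps!i)}"
  have iR: "i \<in> R" and fin: "finite R" using i unfolding R_def by auto
  define k where "k = Min R"
  have "R \<noteq> {}" using iR by blast
  then have k: "k \<in> R" "k \<le> i" "\<And>j. Suc j = k \<Longrightarrow> j \<notin> R"
    using Min_in[OF fin] Min_le[OF fin iR] Min_le[OF fin] unfolding k_def by force+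
  have kl: "Suc k < length ps" "snd (ps!k) = snd (ps!i)" using k(1,2) i(1) by (simp_all add: R_def)
  have "snd (ps!Suc k) \<le> snd (ps!k)" "snd (ps!Suc i) \<le> snd (ps!Suc k)"
    using path_nth_mono[OF ps, of k "Suc k"] path_nth_mono[OF ps, of "Suc k"
      "Suc i"] k(2) i(1) kl(1)
    by auto
  then have vout: "snd (ps!Suc k) = snd (ps!k)" using kl(2) i(2) by simp
  have "left_turn ps k \<or> (k = 0 \<and> isolated ps 0 \<and> is_index ps 0 (Min A))"
  proof (cases k)
    case 0
    then show ?thesis using isolated_0 is_index_row[OF ps kl(1) vout] path_nth_0[OF ps] kl(1)
      by simp
  next
    case (Suc j)
    then have "snd (ps!j) \<noteq> snd (ps!k)" using k(3) kl unfolding R_def by auto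
    then have "fst (ps!j) = fst (ps!k)" using path_step_row_or_col[OF ps, of j] kl(1) Suc by auto
    then show ?thesis using vout kl(1) Suc unfolding left_turn_def horiz_def vert_def by auto
  qed
  then show ?thesis using k(2) kl(2) by blast
qed

lemma path_index_cases:
  assumes ps: "is_path A ps" and "finite A" "c \<in> A"
  obtains (single) k where "k < length ps" "isolated ps k" "is_index ps k c"
  | (row) i where "Suc i < length ps" "fst (ps!i) = c" "fst (ps!Suc i) = c"
  | (col) i where "Suc i < length ps" "snd (ps!i) = c" "snd (ps!Suc i) = c"
proof -
  define S where "S = {k. k < length ps \<and> (fst (ps!k) = c \<or> snd (ps!k) = c)}"
  have "S \<noteq> {}" and fin: "finite S" using path_covers_index[OF assms] unfolding S_def by auto
  define k where "k = Min S"
  have k: "k \<in> S" "\<And>l. l \<in> S \<Longrightarrow> k \<le> l"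
    unfolding k_def by (rule Min_in[OF fin \<open>S \<noteq> {}\<close>], erule Min_le[OF fin])
  show thesis
  proof (cases "S = {k}")
    case True
    have "fst (ps!l) \<noteq> c \<and> snd (ps!l) \<noteq> c" if "l < length ps" "l \<noteq> k" for l
    proof -
      have "l \<notin> S" using True that(2) by blast
      then show ?thesis using that(1) unfolding S_def by blast
    qed
    moreover have "k < length ps" "c \<in> {fst (ps!k), snd (ps!k)}" using k(1) unfolding S_def by auto
    ultimately have "is_index ps k c" "k < length ps" unfolding is_index_def by blast+
    then show thesis using single turn_not_index[OF ps] unfolding isolated_def by blast
  next
    case False
    then obtain l where l: "l \<in> S" "l \<noteq> k" using k(1) by blast
    then have "k < l" using k(2) by (simp add: le_neq_implies_less)
    then have kl: "Suc k < length ps" "l < length ps" using l unfolding S_def by auto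
    have mono: "fst (ps!k) \<le> fst (ps!Suc k)" "fst (ps!Suc k) \<le> fst (ps!l)"
      "snd (ps!Suc k) \<le> snd (ps!k)" "snd (ps!l) \<le> snd (ps!Suc k)"
      using path_nth_mono[OF ps, of k "Suc k"] path_nth_mono[OF ps, of "Suc k" l] \<open>k < l\<close> kl by auto
    have diag: "fst (ps!l) \<le> snd (ps!l)" using path_nth_in_T[OF ps kl(2)] by simp
    have kc: "fst (ps!k) = c \<or> snd (ps!k) = c" and lc: "fst (ps!l) = c \<or> snd (ps!l) = c"
      using k(1) l(1) unfolding S_def by auto
    show thesis
    proof (cases "fst (ps!k) = c")
      case True
      then have "fst (ps!l) = c" using lc mono diag by auto
      then show thesis using row[OF kl(1)] True mono by simp
    next
      case False
      then have "snd (ps!k) = c" using kc by simp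
      then have "snd (ps!l) = c" using lc mono diag by auto
      then show thesis using col[OF kl(1)] \<open>snd (ps!k) = c\<close> mono by simp
    qed
  qed
qed

lemma large_index_in_minus_list:
  assumes ps: "is_path A ps" and "finite A" "c \<in> A" "m < c"
  shows "\<exists>x\<in>minus_list m ps. fst x = c \<or> snd x = c"
  using ps assms(2,3)
proof (cases rule: path_index_cases)
  case (single k)
  then show ?thesis using nth_in_minus_list_iff[OF ps] assms(4) unfolding is_index_def by blast
next
  case (row i)
  then obtain k where k: "k \<le> i" "fst (ps!k) = c"
    and turn: "right_turn ps k \<or> (k = 0 \<and> isolated ps 0 \<and> is_index ps 0 (Max A))"
    using row_run_starts_in_right_turn[OF ps] by (metis (full_types))
  have "c \<le> Max A" using assms(2,3) by simp
  then have "ps!k \<in> minus_list m ps" using nth_in_minus_list_iff[OF ps] turn k row(1) assms(4)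
    by auto
  then show ?thesis using k(2) by blast
next
  case (col i)
  then obtain k where "k < length ps" "snd (ps!k) = c" "right_turn ps k"
    using column_run_ends_in_right_turn[OF ps] by metis
  then show ?thesis using nth_in_minus_list_iff[OF ps] by blast
qed

lemma small_index_off_minus_list:
  assumes ps: "is_path A ps" and "finite A" "c \<in> A" "c \<le> m"
  shows "\<exists>x\<in>set ps - minus_list m ps. fst x = c \<or> snd x = c"
  using ps assms(2,3)
proof (cases rule: path_index_cases)
  case (single k)
  then show ?thesis using nth_notin_minus_list_iff[OF ps] assms(4) nth_mem unfolding is_index_def
    by blast
next
  case (row i)
  then obtain k where "k < length ps" "fst (ps!k) = c" "left_turn ps k"
    using row_run_ends_in_left_turn[OF ps] by metis
  then show ?thesis using nth_notin_minus_list_iff[OF ps] nth_mem by blast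
next
  case (col i)
  then obtain k where k: "k \<le> i" "snd (ps!k) = c"
    and turn: "left_turn ps k \<or> (k = 0 \<and> isolated ps 0 \<and> is_index ps 0 (Min A))"
    using column_run_starts_in_left_turn[OF ps] by (metis (full_types))
  have "Min A \<le> c" using assms(2,3) by simp
  then have "ps!k \<notin> minus_list m ps" using nth_notin_minus_list_iff[OF ps] turn k col(1) assms(4)
    by auto
  then show ?thesis using k col(1) nth_mem by auto
qed

lemma path_less_misses_minus_point:
  assumes ps: "is_path A ps" and qs: "is_path A qs" and "path_less qs ps"
  shows "\<exists>x\<in>minus_list m ps. x \<notin> set qs"
proof -
  obtain k where k: "0 < k" "k < length qs" "k < length ps" "take k qs = take k ps"
    "fst (qs!k) = fst (qs!(k-1))" "snd (ps!k) = snd (ps!(k-1))"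
    using assms(3) unfolding path_less_def by blast
  have before: "i < k \<Longrightarrow> qs!i = ps!i" for i using k(4) by (metis nth_take)
  obtain j where j: "k \<le> j" "j < length ps" "snd (ps!j) = snd (ps!(k-1))" "right_turn ps j"
    using column_run_ends_in_right_turn[OF ps, of "k-1"] k by auto
  have "snd (qs!k) < snd (qs!(k-1))" using path_hstepI[OF qs, of "k-1"] k unfolding hstep_def
    by simp
  then have "snd (qs!i) < snd (ps!j)" if "k \<le> i" "i < length qs" for i
    using path_nth_mono[OF qs that] j(3) before[of "k-1"] k(1) by auto
  moreover have "qs!i \<noteq> ps!j" if "i < k" for i
    using before[OF that] path_nth_inj[OF ps, of i j] that j by simp
  ultimately have "ps!j \<notin> set qs" by (metis in_set_conv_nth less_irrefl not_le)
  then show ?thesis using nth_in_minus_list_iff[OF ps j(2)] j(4) by blast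
qed

lemma path_less_misses_plus_point:
  assumes ps: "is_path A ps" and qs: "is_path A qs" and "path_less ps qs"
  shows "\<exists>x\<in>set ps - minus_list m ps. x \<notin> set qs"
proof -
  obtain k where k: "0 < k" "k < length ps" "k < length qs" "take k ps = take k qs"
    "fst (ps!k) = fst (ps!(k-1))" "snd (qs!k) = snd (qs!(k-1))"
    using assms(3) unfolding path_less_def by blast
  have before: "i < k \<Longrightarrow> qs!i = ps!i" for i using k(4) by (metis nth_take)
  obtain j where j: "k \<le> j" "j < length ps" "fst (ps!j) = fst (ps!(k-1))" "left_turn ps j"
    using row_run_ends_in_left_turn[OF ps, of "k-1"] k by auto
  have "fst (qs!(k-1)) < fst (qs!k)" using path_vstepI[OF qs, of "k-1"] k unfolding vstep_def
    by simp
  then have "fst (ps!j) < fst (qs!i)" if "k \<le> i" "i < length qs" for i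
    using path_nth_mono[OF qs that] j(3) before[of "k-1"] k(1) by auto
  moreover have "qs!i \<noteq> ps!j" if "i < k" for i
    using before[OF that] path_nth_inj[OF ps, of i j] that j by simp
  ultimately have "ps!j \<notin> set qs" by (metis in_set_conv_nth less_irrefl not_le)
  then show ?thesis using nth_notin_minus_list_iff[OF ps j(2)] j(2,4) nth_mem by blast
qed

section \<open>Dropping a point of a facet\<close>

lemma path_update:
  assumes ps: "is_path A ps" and k: "0 < k" "k < length ps" and y: "y \<in> T A"
    and into: "hstep A (ps!(k-1)) y \<or> vstep A (ps!(k-1)) y"
    and out: "Suc k < length ps \<Longrightarrow> hstep A y (ps!Suc k) \<or> vstep A y (ps!Suc k)"
    and last: "Suc k = length ps \<Longrightarrow> fst y = snd y"
  shows "is_path A (ps[k := y])"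
  unfolding is_path_def
proof (intro conjI allI impI)
  let ?q = "ps[k := y]"
  show ne: "?q \<noteq> []" using k by auto
  show "hd ?q = (Min A, Max A)" using ne k path_nth_0[OF ps] by (simp add: hd_conv_nth)
  show "fst (last ?q) = snd (last ?q)"
  proof (cases "Suc k = length ps")
    case True
    then have "length ps - 1 = k" by simp
    then show ?thesis using ne last True by (simp add: last_conv_nth)
  next
    case False
    then have "length ps - 1 \<noteq> k" using k by simp
    then show ?thesis using ne path_last_diag[OF ps] by (simp add: last_conv_nth)
  qed
  show "set ?q \<subseteq> T A" using is_pathD(4)[OF ps] y by (simp add: set_update_subsetI)
  fix i assume "Suc i < length ?q"
  then show "hstep A (?q!i) (?q!Suc i) \<or> vstep A (?q!i) (?q!Suc i)"
    using into out is_pathD(5)[OF ps, of i] by (cases "Suc i = k"; cases "i = k") auto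
qed

text \<open>The flipped path replaces the turn by the opposite corner of its square.\<close>
lemma right_turn_flip:
  assumes ps: "is_path A ps" and rt: "right_turn ps k"
  shows "\<exists>qs. is_path A qs \<and> path_less qs ps \<and> set ps - {ps!k} \<subseteq> set qs"
proof -
  obtain j where j: "k = Suc j" "Suc j < length ps" using turn_pos rt by (metis gr0_conv_Suc)
  have vin: "snd (ps!k) = snd (ps!j)" using rt j unfolding right_turn_def vert_def by auto
  have V: "vstep A (ps!j) (ps!k)" using path_vstepI[OF ps j(2)] vin j by simp
  have pj: "fst (ps!j) \<in> A" "snd (ps!j) \<in> A" using path_nth_in_T[OF ps] j by auto
  obtain y where y: "is_path A (ps[k := y])" "fst y = fst (ps!j)"
  proof (cases "Suc k < length ps")
    case True
    have hout: "fst (ps!Suc k) = fst (ps!k)" using rt True j unfolding right_turn_def horiz_def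
      by auto
    have H: "hstep A (ps!k) (ps!Suc k)" using path_hstepI[OF ps True hout] .
    let ?y = "(fst (ps!j), snd (ps!Suc k))"
    have "?y \<in> T A" "hstep A (ps!j) ?y" "vstep A ?y (ps!Suc k)"
      using V H vin hout pj path_nth_in_T[OF ps True] unfolding T_def vstep_def hstep_def by auto
    then show thesis using that[of ?y] path_update[OF ps _ _ _] j True by auto
  next
    case False
    then have "k = length ps - 1" using j by simp
    then have dg: "fst (ps!k) = snd (ps!k)" using path_last_diag[OF ps] by simp
    let ?y = "(fst (ps!j), fst (ps!j))"
    have "?y \<in> T A" "hstep A (ps!j) ?y"
      using V vin dg pj unfolding T_def vstep_def hstep_def by auto
    then show thesis using that[of ?y] path_update[OF ps _ _ _] j False by auto
  qed
  have "y \<noteq> ps!k" using y(2) V unfolding vstep_def by auto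
  then have "path_less (ps[k := y]) ps" unfolding path_less_def
    using j vin y(2) by (intro exI[of _ k]) (auto simp: take_update_cancel)
  then show ?thesis using y(1) set_update_distinct[OF path_distinct[OF ps], of k y] j by auto
qed

lemma left_turn_flip:
  assumes ps: "is_path A ps" and lt: "left_turn ps k"
  shows "\<exists>qs. is_path A qs \<and> path_less ps qs \<and> set ps - {ps!k} \<subseteq> set qs"
proof -
  obtain j where j: "k = Suc j" "Suc j < length ps" using turn_pos lt by (metis gr0_conv_Suc)
  have hin: "fst (ps!k) = fst (ps!j)" using lt j unfolding left_turn_def horiz_def by auto
  have H: "hstep A (ps!j) (ps!k)" using path_hstepI[OF ps j(2)] hin j by simp
  have pj: "fst (ps!j) \<in> A" "snd (ps!j) \<in> A" using path_nth_in_T[OF ps] j by auto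
  obtain y where y: "is_path A (ps[k := y])" "snd y = snd (ps!j)"
  proof (cases "Suc k < length ps")
    case True
    have vout: "snd (ps!Suc k) = snd (ps!k)" using lt True j unfolding left_turn_def vert_def
      by auto
    have V: "vstep A (ps!k) (ps!Suc k)" using path_vstepI[OF ps True vout] .
    let ?y = "(fst (ps!Suc k), snd (ps!j))"
    have "?y \<in> T A" "vstep A (ps!j) ?y" "hstep A ?y (ps!Suc k)"
      using V H hin vout pj path_nth_in_T[OF ps True] unfolding T_def vstep_def hstep_def by auto
    then show thesis using that[of ?y] path_update[OF ps _ _ _] j True by auto
  next
    case False
    then have "k = length ps - 1" using j by simp
    then have dg: "fst (ps!k) = snd (ps!k)" using path_last_diag[OF ps] by simp
    let ?y = "(snd (ps!j), snd (ps!j))"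
    have "?y \<in> T A" "vstep A (ps!j) ?y"
      using H hin dg pj unfolding T_def vstep_def hstep_def by auto
    then show thesis using that[of ?y] path_update[OF ps _ _ _] j False by auto
  qed
  have "y \<noteq> ps!k" using y(2) H unfolding hstep_def by auto
  then have "path_less ps (ps[k := y])" unfolding path_less_def
    using j hin y(2) by (intro exI[of _ k]) (auto simp: take_update_cancel)
  then show ?thesis using y(1) set_update_distinct[OF path_distinct[OF ps], of k y] j by auto
qed

definition remove_nth :: "nat \<Rightarrow> 'a list \<Rightarrow> 'a list" where
  "remove_nth k xs = take k xs @ drop (Suc k) xs"

definition insert_nth :: "nat \<Rightarrow> 'a \<Rightarrow> 'a list \<Rightarrow> 'a list" where
  "insert_nth j y xs = take j xs @ y # drop j xs"

lemma length_remove_nth: "k < length xs \<Longrightarrow> length (remove_nth k xs) = length xs - 1"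
  unfolding remove_nth_def by simp

lemma nth_remove_nth:
  "k < length xs \<Longrightarrow> i < length xs - 1 \<Longrightarrow> remove_nth k xs ! i = xs ! (if i < k then i else Suc i)"
  unfolding remove_nth_def by (auto simp: nth_append min_def)

lemma set_remove_nth: "k < length xs \<Longrightarrow> set xs - {xs!k} \<subseteq> set (remove_nth k xs)"
  unfolding remove_nth_def by (subst (1) id_take_nth_drop[of k xs]) auto

lemma length_insert_nth: "j \<le> length xs \<Longrightarrow> length (insert_nth j y xs) = Suc (length xs)"
  unfolding insert_nth_def by simp

lemma nth_insert_nth:
  "j \<le> length xs \<Longrightarrow>
    insert_nth j y xs ! i = (if i < j then xs!i else if i = j then y else xs!(i - 1))"
  unfolding insert_nth_def by (auto simp: nth_append min_def nth_Cons')

lemma set_insert_nth: "set (insert_nth j y xs) = insert y (set xs)"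
  unfolding insert_nth_def
  by (subst (2) append_take_drop_id[symmetric, of xs j]) (auto simp del: append_take_drop_id)

lemma step_subset:
  "hstep A p q \<or> vstep A p q \<Longrightarrow> A' \<subseteq> A \<Longrightarrow> fst q \<in> A' \<Longrightarrow> snd q \<in> A' \<Longrightarrow> hstep A' p q \<or> vstep A' p q"
  unfolding hstep_def vstep_def by blast

lemma step_insert:
  "hstep A p q \<or> vstep A p q \<Longrightarrow> \<not> (snd q < c \<and> c < snd p) \<Longrightarrow> \<not> (fst p < c \<and> c < fst q) \<Longrightarrow>
   hstep (insert c A) p q \<or> vstep (insert c A) p q"
  unfolding hstep_def vstep_def by auto

lemma path_remove_nth:
  assumes ps: "is_path A ps" and k: "Suc k < length ps" and sub: "A' \<subseteq> A"
    and head: "remove_nth k ps ! 0 = (Min A', Max A')"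
    and idx: "\<And>i. i < length ps \<Longrightarrow> i \<noteq> k \<Longrightarrow> fst (ps!i) \<in> A' \<and> snd (ps!i) \<in> A'"
    and join: "0 < k \<Longrightarrow> hstep A' (ps!(k-1)) (ps!Suc k) \<or> vstep A' (ps!(k-1)) (ps!Suc k)"
  shows "is_path A' (remove_nth k ps)"
  unfolding is_path_def
proof (intro conjI allI impI)
  let ?r = "remove_nth k ps"
  have len: "length ?r = length ps - 1" using length_remove_nth[of k ps] k by simp
  have nth: "i < length ?r \<Longrightarrow> ?r ! i = ps ! (if i < k then i else Suc i)" for i
    using nth_remove_nth[of k ps i] k len by simp
  show ne: "?r \<noteq> []" using len k by auto
  show "hd ?r = (Min A', Max A')" using ne head by (simp add: hd_conv_nth)
  have "last ?r = last ps" using k unfolding remove_nth_def by (simp add: last_drop)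
  then show "fst (last ?r) = snd (last ?r)" using is_pathD(3)[OF ps] by simp
  show "set ?r \<subseteq> T A'"
  proof
    fix x assume "x \<in> set ?r"
    then obtain i where i: "i < length ?r" "x = ?r ! i" by (auto simp: in_set_conv_nth)
    define i' where "i' = (if i < k then i else Suc i)"
    have "i' < length ps" "i' \<noteq> k" "x = ps ! i'" using i nth len unfolding i'_def by auto
    then have "fst x \<in> A'" "snd x \<in> A'" "fst x \<le> snd x"
      using idx[of i'] path_nth_in_T(3)[OF ps, of i'] by auto
    then show "x \<in> T A'" unfolding T_def by (cases x) auto
  qed
  fix i assume i: "Suc i < length ?r"
  have lift: "hstep A' (ps!l) (ps!Suc l) \<or> vstep A' (ps!l) (ps!Suc l)" if "Suc l < length ps"
    "Suc l \<noteq> k" for l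
    using step_subset[OF is_pathD(5)[OF ps that(1)] sub] idx[OF that] by blast
  consider "Suc i < k" | "Suc i = k" | "k \<le> i" by linarith
  then show "hstep A' (?r!i) (?r!Suc i) \<or> vstep A' (?r!i) (?r!Suc i)"
  proof cases
    case 1 then show ?thesis using nth i lift[of i] k by simp
  next
    case 2
    then have "k - 1 = i" by simp
    then show ?thesis using 2 nth i join by auto
  next
    case 3 then show ?thesis using nth i lift[of "Suc i"] len by simp
  qed
qed

lemma path_insert_nth:
  assumes P: "is_path A P" and j: "j < length P" and sub: "A \<subseteq> B"
    and head: "insert_nth j y P ! 0 = (Min B, Max B)" and y: "y \<in> T B"
    and into: "0 < j \<Longrightarrow> hstep B (P!(j-1)) y \<or> vstep B (P!(j-1)) y"
    and out: "hstep B y (P!j) \<or> vstep B y (P!j)"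
    and other: "\<And>i. Suc i < length P \<Longrightarrow> Suc i \<noteq> j \<Longrightarrow>
      hstep B (P!i) (P!Suc i) \<or> vstep B (P!i) (P!Suc i)"
  shows "is_path B (insert_nth j y P)"
  unfolding is_path_def
proof (intro conjI allI impI)
  let ?q = "insert_nth j y P"
  have len: "length ?q = Suc (length P)" using length_insert_nth[of j P y] j by simp
  have nth: "?q ! i = (if i < j then P!i else if i = j then y else P!(i - 1))" for i
    using nth_insert_nth[of j P y i] j by simp
  show ne: "?q \<noteq> []" using len by auto
  show "hd ?q = (Min B, Max B)" using ne head by (simp add: hd_conv_nth)
  have "last ?q = P ! (length P - 1)" using ne len nth[of "length P"] j by (simp add: last_conv_nth)
  then show "fst (last ?q) = snd (last ?q)" using path_last_diag[OF P] by simp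
  show "set ?q \<subseteq> T B"
    using is_pathD(4)[OF P] y sub unfolding set_insert_nth T_def by auto
  fix i assume i: "Suc i < length ?q"
  consider "Suc i < j" | "Suc i = j" | "i = j" | "j < i" by linarith
  then show "hstep B (?q!i) (?q!Suc i) \<or> vstep B (?q!i) (?q!Suc i)"
  proof cases
    case 1 then show ?thesis using nth other[of i] j by simp
  next
    case 2 then show ?thesis using nth into by auto
  next
    case 3 then show ?thesis using nth out by simp
  next
    case 4 then show ?thesis using nth other[of "i - 1"] i len by simp
  qed
qed

lemma path_row_crossing:
  assumes P: "is_path A P" and c: "c \<notin> A" "c < fst (last P)"
  obtains j where "j < length P" "c < fst (P!j)" "\<And>i. i < j \<Longrightarrow> fst (P!i) < c"
    "0 < j \<Longrightarrow> vstep A (P!(j-1)) (P!j)"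
proof -
  have "\<exists>i. i < length P \<and> c < fst (P!i)"
    using c(2) is_pathD(1)[OF P] by (intro exI[of _ "length P - 1"]) (simp add: last_conv_nth)
  define j where "j = (LEAST i. i < length P \<and> c < fst (P!i))"
  have j: "j < length P" "c < fst (P!j)" using LeastI_ex[OF \<open>\<exists>i. _\<close>] unfolding j_def by blast+
  have before: "fst (P!i) < c" if "i < j" for i
  proof -
    have "\<not> c < fst (P!i)" using not_less_Least[of i "\<lambda>i. i < length P \<and> c < fst (P!i)"] that j(1)
      unfolding j_def[symmetric] by simp
    moreover have "fst (P!i) \<noteq> c" using path_nth_in_T(1)[OF P, of i] that j(1) c(1) by auto
    ultimately show ?thesis by simp
  qed
  have "vstep A (P!(j-1)) (P!j)" if "0 < j"
  proof -
    have "Suc (j-1) < length P" "fst (P!(j-1)) \<noteq> fst (P!j)" using before[of "j-1"] j that by auto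
    then show ?thesis using path_vstepI[OF P] path_step_row_or_col[OF P] that by fastforce
  qed
  then show thesis using that j before by blast
qed

lemma path_column_crossing:
  assumes P: "is_path A P" and c: "c \<notin> A" "fst (last P) < c"
  obtains j where "j < length P" "snd (P!j) < c" "\<And>i. i < j \<Longrightarrow> c < snd (P!i)"
    "0 < j \<Longrightarrow> hstep A (P!(j-1)) (P!j)"
proof -
  have "\<exists>i. i < length P \<and> snd (P!i) < c"
    using c(2) is_pathD(1)[OF P] path_last_diag[OF P]
    by (intro exI[of _ "length P - 1"]) (simp add: last_conv_nth)
  define j where "j = (LEAST i. i < length P \<and> snd (P!i) < c)"
  have j: "j < length P" "snd (P!j) < c" using LeastI_ex[OF \<open>\<exists>i. _\<close>] unfolding j_def by blast+
  have before: "c < snd (P!i)" if "i < j" for i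
  proof -
    have "\<not> snd (P!i) < c" using not_less_Least[of i "\<lambda>i. i < length P \<and> snd (P!i) < c"] that j(1)
      unfolding j_def[symmetric] by simp
    moreover have "snd (P!i) \<noteq> c" using path_nth_in_T(2)[OF P, of i] that j(1) c(1) by auto
    ultimately show ?thesis by simp
  qed
  have "hstep A (P!(j-1)) (P!j)" if "0 < j"
  proof -
    have "Suc (j-1) < length P" "snd (P!(j-1)) \<noteq> snd (P!j)" using before[of "j-1"] j that by auto
    then show ?thesis using path_hstepI[OF P] path_step_row_or_col[OF P] that by fastforce
  qed
  then show thesis using that j before by blast
qed

text \<open>A new index c below the diagonal end of the path becomes a row: the point (c, b) is
  inserted where the path crosses row c, or in front if c is smaller than all of A.\<close>
lemma insert_row_index:
  assumes fin: "finite A" and P: "is_path A P" and c: "c \<notin> A" "c < fst (last P)"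
  shows "\<exists>Q. is_path (insert c A) Q \<and> set P \<subseteq> set Q"
proof -
  let ?B = "insert c A"
  obtain j where j: "j < length P" "c < fst (P!j)" and before: "\<And>i. i < j \<Longrightarrow> fst (P!i) < c"
    and V: "0 < j \<Longrightarrow> vstep A (P!(j-1)) (P!j)"
    using path_row_crossing[OF P c] by blast
  let ?y = "(c, snd (P!j))"
  have ne: "P \<noteq> []" using j(1) by auto
  have high: "c < snd (P!i)" if "i < length P" for i
  proof -
    have "snd (P!(length P - 1)) \<le> snd (P!i)" using path_nth_mono[OF P, of i "length P - 1"] that
      by simp
    then show ?thesis using path_last_diag[OF P] c(2) ne by (simp add: last_conv_nth)
  qed
  have gap: "\<not> (c < a \<and> a < fst (P!j))" if "a \<in> A" for a
    using V before[of "j - 1"] that Min_le[OF fin that] path_nth_0[OF P] unfolding vstep_def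
    by (cases "j = 0") auto
  have head: "insert_nth j ?y P ! 0 = (Min ?B, Max ?B)"
  proof -
    have "A \<noteq> {}" using path_nth_in_T(1)[OF P, of 0] ne by auto
    then have "Max ?B = max c (Max A)" "Min ?B = min c (Min A)" using fin by simp_all
    moreover have "c < Max A" using high[of 0] path_nth_0[OF P] ne by simp
    moreover have "Min A < c \<longleftrightarrow> 0 < j" using j(2) before[of 0] path_nth_0[OF P] by (cases j) auto
    ultimately show ?thesis using nth_insert_nth[of j P ?y 0] j(1) path_nth_0[OF P] by auto
  qed
  have yT: "?y \<in> T ?B" using j path_nth_in_T[OF P j(1)] unfolding T_def by auto
  have into: "hstep ?B (P!(j-1)) ?y \<or> vstep ?B (P!(j-1)) ?y" if "0 < j"
    using V[OF that] before[of "j-1"] that j(2) unfolding vstep_def by auto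
  have out: "hstep ?B ?y (P!j) \<or> vstep ?B ?y (P!j)"
    using j gap path_nth_in_T[OF P j(1)] unfolding vstep_def by auto
  have other: "hstep ?B (P!i) (P!Suc i) \<or> vstep ?B (P!i) (P!Suc i)"
    if "Suc i < length P" "Suc i \<noteq> j" for i
  proof (rule step_insert[OF is_pathD(5)[OF P that(1)]])
    show "\<not> (snd (P!Suc i) < c \<and> c < snd (P!i))" using high[of "Suc i"] that(1) by simp
    show "\<not> (fst (P!i) < c \<and> c < fst (P!Suc i))"
    proof
      assume h: "fst (P!i) < c \<and> c < fst (P!Suc i)"
      then have "\<not> j \<le> i" using path_nth_mono[OF P, of j i] j(2) that(1) by auto
      then show False using before[of "Suc i"] h that(2) by simp
    qed
  qed
  have "is_path ?B (insert_nth j ?y P)"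
    by (rule path_insert_nth[OF P j(1) subset_insertI head yT into out other])
  then show ?thesis using set_insert_nth[of j ?y P] by blast
qed

lemma insert_column_index:
  assumes fin: "finite A" and P: "is_path A P" and c: "c \<notin> A" "fst (last P) < c"
  shows "\<exists>Q. is_path (insert c A) Q \<and> set P \<subseteq> set Q"
proof -
  let ?B = "insert c A"
  obtain j where j: "j < length P" "snd (P!j) < c" and before: "\<And>i. i < j \<Longrightarrow> c < snd (P!i)"
    and H: "0 < j \<Longrightarrow> hstep A (P!(j-1)) (P!j)"
    using path_column_crossing[OF P c] by blast
  let ?y = "(fst (P!j), c)"
  have ne: "P \<noteq> []" using j(1) by auto
  have low: "fst (P!i) < c" if "i < length P" for i
  proof -
    have "fst (P!i) \<le> fst (P!(length P - 1))" using path_nth_mono[OF P, of i "length P - 1"] that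
      by simp
    then show ?thesis using c(2) ne by (simp add: last_conv_nth)
  qed
  have gap: "\<not> (snd (P!j) < a \<and> a < c)" if "a \<in> A" for a
    using H before[of "j - 1"] that Max_ge[OF fin that] path_nth_0[OF P] unfolding hstep_def
    by (cases "j = 0") auto
  have head: "insert_nth j ?y P ! 0 = (Min ?B, Max ?B)"
  proof -
    have "A \<noteq> {}" using path_nth_in_T(1)[OF P, of 0] ne by auto
    then have "Max ?B = max c (Max A)" "Min ?B = min c (Min A)" using fin by simp_all
    moreover have "Min A < c" using low[of 0] path_nth_0[OF P] ne by simp
    moreover have "c < Max A \<longleftrightarrow> 0 < j" using j(2) before[of 0] path_nth_0[OF P] by (cases j) auto
    ultimately show ?thesis using nth_insert_nth[of j P ?y 0] j(1) path_nth_0[OF P] by auto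
  qed
  have yT: "?y \<in> T ?B" using low[OF j(1)] path_nth_in_T[OF P j(1)] unfolding T_def by auto
  have into: "hstep ?B (P!(j-1)) ?y \<or> vstep ?B (P!(j-1)) ?y" if "0 < j"
    using H[OF that] before[of "j-1"] that j(2) unfolding hstep_def by auto
  have out: "hstep ?B ?y (P!j) \<or> vstep ?B ?y (P!j)"
    using j gap path_nth_in_T[OF P j(1)] unfolding hstep_def by auto
  have other: "hstep ?B (P!i) (P!Suc i) \<or> vstep ?B (P!i) (P!Suc i)"
    if "Suc i < length P" "Suc i \<noteq> j" for i
  proof (rule step_insert[OF is_pathD(5)[OF P that(1)]])
    show "\<not> (snd (P!Suc i) < c \<and> c < snd (P!i))"
    proof
      assume h: "snd (P!Suc i) < c \<and> c < snd (P!i)"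
      then have "\<not> j \<le> i" using path_nth_mono[OF P, of j i] j(2) that(1) by auto
      then show False using before[of "Suc i"] h that(2) by simp
    qed
    show "\<not> (fst (P!i) < c \<and> c < fst (P!Suc i))" using low[of "Suc i"] that(1) by simp
  qed
  have "is_path ?B (insert_nth j ?y P)"
    by (rule path_insert_nth[OF P j(1) subset_insertI head yT into out other])
  then show ?thesis using set_insert_nth[of j ?y P] by blast
qed

lemma insert_index:
  assumes "finite A" "is_path A P" "c \<notin> A"
  shows "\<exists>Q. is_path (insert c A) Q \<and> set P \<subseteq> set Q"
proof -
  have "fst (last P) \<in> A" using path_nth_in_T(1)[OF assms(2)] is_pathD(1)[OF assms(2)]
    by (simp add: last_conv_nth)
  then have "c < fst (last P) \<or> fst (last P) < c" using assms(3) by (metis linorder_neqE_nat)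
  then show ?thesis using insert_row_index[OF assms] insert_column_index[OF assms] by blast
qed

lemma isolated_first_remove_head:
  assumes fin: "finite A" and ps: "is_path A ps" and l2: "2 \<le> length ps" and ix: "is_index ps 0 c"
  shows "ps!1 = (Min (A - {c}), Max (A - {c}))"
proof -
  have l1: "Suc 0 < length ps" using l2 by simp
  have p1: "fst (ps!1) \<in> A - {c}" "snd (ps!1) \<in> A - {c}"
    using ix path_nth_in_T[OF ps l1] l1 unfolding is_index_def by auto
  have c: "c = Min A \<or> c = Max A" using ix path_nth_0[OF ps] unfolding is_index_def by auto
  have finc: "finite (A - {c})" using fin by simp
  from ps l1 show ?thesis
  proof (cases rule: path_step_cases)
    case horiz
    then have "c = Max A" using c p1 path_nth_0[OF ps] by auto
    have "Min (A - {c}) = fst (ps!1)"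
      using horiz(1) p1 path_nth_0[OF ps] fin by (intro Min_eqI[OF finc]) auto
    moreover have "Max (A - {c}) = snd (ps!1)"
    proof (rule Max_eqI[OF finc])
      fix a assume a: "a \<in> A - {c}"
      then have "a < snd (ps!0)" using Max_ge[OF fin, of a] \<open>c = Max A\<close> path_nth_0[OF ps]
        by fastforce
      then show "a \<le> snd (ps!1)" using horiz(3) a by (metis DiffD1 One_nat_def not_le)
    qed (use p1 in auto)
    ultimately show ?thesis by (simp add: prod_eq_iff)
  next
    case vert
    then have "c = Min A" using c p1 path_nth_0[OF ps] by auto
    have "Max (A - {c}) = snd (ps!1)"
      using vert(1) p1 path_nth_0[OF ps] fin by (intro Max_eqI[OF finc]) auto
    moreover have "Min (A - {c}) = fst (ps!1)"
    proof (rule Min_eqI[OF finc])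
      fix a assume a: "a \<in> A - {c}"
      then have "fst (ps!0) < a" using Min_le[OF fin, of a] \<open>c = Min A\<close> path_nth_0[OF ps]
        by fastforce
      then show "fst (ps!1) \<le> a" using vert(3) a by (metis DiffD1 One_nat_def not_le)
    qed (use p1 in auto)
    ultimately show ?thesis by (simp add: prod_eq_iff)
  qed
qed

lemma hstep_hstep_remove:
  assumes "hstep A p q" "hstep A q r"
  shows "hstep (A - {snd q}) p r"
proof -
  have "\<not> (snd r < a \<and> a < snd p)" if a: "a \<in> A - {snd q}" for a
  proof
    assume lt: "snd r < a \<and> a < snd p"
    from a consider "a < snd q" | "snd q < a" by fastforce
    then show False using lt a assms unfolding hstep_def by cases auto
  qed
  then show ?thesis using assms unfolding hstep_def by auto
qed

lemma vstep_vstep_remove: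
  assumes "vstep A p q" "vstep A q r"
  shows "vstep (A - {fst q}) p r"
proof -
  have "\<not> (fst p < a \<and> a < fst r)" if a: "a \<in> A - {fst q}" for a
  proof
    assume lt: "fst p < a \<and> a < fst r"
    from a consider "a < fst q" | "fst q < a" by fastforce
    then show False using lt a assms unfolding vstep_def by cases auto
  qed
  then show ?thesis using assms unfolding vstep_def by auto
qed

lemma isolated_join:
  assumes ps: "is_path A ps" and iso: "isolated ps (Suc j)" and k: "Suc (Suc j) < length ps"
    and ix: "is_index ps (Suc j) c"
  shows "hstep (A - {c}) (ps!j) (ps!Suc (Suc j)) \<or> vstep (A - {c}) (ps!j) (ps!Suc (Suc j))"
proof -
  have j: "Suc j < length ps" using k by simp
  have "fst (ps!j) \<noteq> c" "snd (ps!j) \<noteq> c" "c \<in> {fst (ps!Suc j), snd (ps!Suc j)}"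
    using ix j unfolding is_index_def by auto
  with isolated_straight[OF ps iso k] consider
    "fst (ps!j) = fst (ps!Suc j)" "fst (ps!Suc (Suc j)) = fst (ps!Suc j)" "c = snd (ps!Suc j)"
    | "snd (ps!j) = snd (ps!Suc j)" "snd (ps!Suc (Suc j)) = snd (ps!Suc j)" "c = fst (ps!Suc j)"
    by auto
  then show ?thesis
  proof cases
    case 1
    then show ?thesis using hstep_hstep_remove path_hstepI[OF ps j] path_hstepI[OF ps k] by simp
  next
    case 2
    then show ?thesis using vstep_vstep_remove path_vstepI[OF ps j] path_vstepI[OF ps k] by simp
  qed
qed

lemma isolated_remove_path:
  assumes fin: "finite A" and ps: "is_path A ps" and iso: "isolated ps k" and ix: "is_index ps k c"
    and l2: "2 \<le> length ps"
  shows "is_path (A - {c}) (remove_nth k ps)"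
proof -
  have k: "Suc k < length ps" using isolated_not_last[OF ps iso l2] .
  then have ne: "ps \<noteq> []" by auto
  have idx: "fst (ps!i) \<in> A - {c} \<and> snd (ps!i) \<in> A - {c}" if "i < length ps" "i \<noteq> k" for i
    using ix that path_nth_in_T[OF ps that(1)] unfolding is_index_def by blast
  have head: "remove_nth k ps ! 0 = (Min (A - {c}), Max (A - {c}))"
  proof (cases k)
    case 0
    then have "remove_nth k ps ! 0 = ps ! 1" using nth_remove_nth[of k ps 0] k by fastforce
    then show ?thesis using isolated_first_remove_head[OF fin ps l2] ix 0 by simp
  next
    case (Suc j)
    have "Min A \<in> A - {c}" "Max A \<in> A - {c}" using idx[of 0] ne Suc path_nth_0[OF ps] by auto
    then have "Min (A - {c}) = Min A" "Max (A - {c}) = Max A"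
      using fin by (auto intro: Min_eqI Max_eqI)
    then show ?thesis using nth_remove_nth[of k ps 0] k Suc path_nth_0[OF ps] by simp
  qed
  have join: "hstep (A - {c}) (ps!(k-1)) (ps!Suc k) \<or> vstep (A - {c}) (ps!(k-1)) (ps!Suc k)" if
    "0 < k"
    using isolated_join[OF ps, of "k - 1"] iso ix k that by simp
  show ?thesis by (rule path_remove_nth[OF ps k Diff_subset head idx join])
qed

lemma isolated_swap_path:
  assumes n: "n = 2 * m" and A: "A \<in> AA n" and ps: "is_path A ps"
    and iso: "isolated ps k" and ix: "is_index ps k c"
  shows "\<exists>qs. is_path (swap_index n A c) qs \<and> set ps - {ps!k} \<subseteq> set qs"
proof -
  have fin: "finite A" using AA_D(1)[OF A] .
  have k: "k < length ps" using iso unfolding isolated_def by simp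
  have cA: "c \<in> A" using ix path_nth_in_T[OF ps k] unfolding is_index_def by auto
  have c1: "1 \<le> c" "c \<le> n" using AA_D(2)[OF A cA] by auto
  have nc: "n + 1 - c \<notin> A - {c}" using AA_D(3)[OF A cA, of "n + 1 - c"] c1 by auto
  show ?thesis
  proof (cases "length ps = 1")
    case True
    then obtain p where p: "ps = [p]" by (auto simp: length_Suc_conv)
    then have "k = 0" "Min A = Max A" using k path_nth_0[OF ps] path_last_diag[OF ps] by auto
    have "a = c" if "a \<in> A" for a
    proof -
      have "Min A \<le> a" "a \<le> Max A" "Min A \<le> c" "c \<le> Max A"
        using Min_le[OF fin that] Max_ge[OF fin that] Min_le[OF fin cA] Max_ge[OF fin cA] by auto
      then show "a = c" using \<open>Min A = Max A\<close> by linarith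
    qed
    then have "A = {c}" using cA by blast
    then have "swap_index n A c = {n + 1 - c}" unfolding swap_index_def by auto
    moreover have "is_path {n + 1 - c} [(n + 1 - c, n + 1 - c)]" unfolding is_path_def T_def by auto
    ultimately show ?thesis using p \<open>k = 0\<close> by auto
  next
    case False
    then have "is_path (A - {c}) (remove_nth k ps)"
      using isolated_remove_path[OF fin ps iso ix] k by simp
    then obtain qs where "is_path (swap_index n A c) qs" "set (remove_nth k ps) \<subseteq> set qs"
      using insert_index[OF _ _ nc] fin unfolding swap_index_def by blast
    then show ?thesis using set_remove_nth[OF k] by blast
  qed
qed

lemma minus_point_dropped:
  assumes n: "n = 2 * m" and A: "A \<in> AA n" and ps: "is_path A ps" and x: "x \<in> minus_list m ps"
  shows "\<exists>B qs. B \<in> AA n \<and> is_path B qs \<and> set ps - {x} \<subseteq> set qs \<and>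
    (lex_less B A \<or> (B = A \<and> path_less qs ps))"
proof -
  obtain k where k: "k < length ps" "x = ps!k"
    and cases: "right_turn ps k \<or> (isolated ps k \<and> (\<exists>c. is_index ps k c \<and> m < c))"
    using x unfolding minus_list_def by blast
  from cases show ?thesis
  proof
    assume "right_turn ps k"
    then show ?thesis using right_turn_flip[OF ps] A k(2) by blast
  next
    assume "isolated ps k \<and> (\<exists>c. is_index ps k c \<and> m < c)"
    then obtain c where c: "isolated ps k" "is_index ps k c" "m < c" by blast
    have "c \<in> A" using c(2) path_nth_in_T[OF ps k(1)] unfolding is_index_def by auto
    then show ?thesis
      using isolated_swap_path[OF n A ps c(1,2)] swap_index_AA[OF n A]
        lex_less_swap_index(1)[OF n A] c(3) k(2) by blast
  qed
qed

lemma plus_point_dropped: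
  assumes n: "n = 2 * m" and A: "A \<in> AA n" and ps: "is_path A ps" and x:
    "x \<in> set ps - minus_list m ps"
  shows "\<exists>B qs. B \<in> AA n \<and> is_path B qs \<and> set ps - {x} \<subseteq> set qs \<and>
    (lex_less A B \<or> (B = A \<and> path_less ps qs))"
proof -
  obtain k where k: "k < length ps" "x = ps!k" using x by (auto simp: in_set_conv_nth)
  then have "left_turn ps k \<or> (isolated ps k \<and> (\<exists>c. is_index ps k c \<and> c \<le> m))"
    using x nth_notin_minus_list_iff[OF ps k(1)] by blast
  then show ?thesis
  proof
    assume "left_turn ps k"
    then show ?thesis using left_turn_flip[OF ps] A k(2) by blast
  next
    assume "isolated ps k \<and> (\<exists>c. is_index ps k c \<and> c \<le> m)"
    then obtain c where c: "isolated ps k" "is_index ps k c" "c \<le> m" by blast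
    have "c \<in> A" using c(2) path_nth_in_T[OF ps k(1)] unfolding is_index_def by auto
    then show ?thesis
      using isolated_swap_path[OF n A ps c(1,2)] swap_index_AA[OF n A]
        lex_less_swap_index(2)[OF n A] c(3) k(2) by blast
  qed
qed

section \<open>The shelling\<close>

lemma cplx_Int_eq_cplx_removals:
  assumes "\<And>G. G \<in> \<G> \<Longrightarrow> \<exists>x\<in>X. x \<notin> G" and "\<And>x. x \<in> X \<Longrightarrow> \<exists>G\<in>\<G>. F - {x} \<subseteq> G"
  shows "cplx {F} \<inter> cplx \<G> = cplx {F - {x} | x. x \<in> X}"
proof (intro equalityI subsetI)
  fix H assume "H \<in> cplx {F} \<inter> cplx \<G>"
  then obtain G where "G \<in> \<G>" "H \<subseteq> G" "H \<subseteq> F" unfolding cplx_def by blast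
  moreover obtain x where "x \<in> X" "x \<notin> G" using assms(1) \<open>G \<in> \<G>\<close> by blast
  ultimately show "H \<in> cplx {F - {x} | x. x \<in> X}" unfolding cplx_def by blast
next
  fix H assume "H \<in> cplx {F - {x} | x. x \<in> X}"
  then obtain x where "x \<in> X" "H \<subseteq> F - {x}" unfolding cplx_def by blast
  moreover obtain G where "G \<in> \<G>" "F - {x} \<subseteq> G" using assms(2) \<open>x \<in> X\<close> by blast
  ultimately show "H \<in> cplx {F} \<inter> cplx \<G>" unfolding cplx_def by blast
qed

lemma Delta'_0:
  shows "F \<in> facets (Delta' 0) \<Longrightarrow> F = {}" and "\<not> facet_less 0 G H" and "Fminus 0 F = {}"
proof -
  have "V 0 = {}" unfolding V_def by auto
  then show "F \<in> facets (Delta' 0) \<Longrightarrow> F = {}" unfolding facets_def Delta'_def by auto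
  have "AA 0 = {{}}" unfolding AA_def by auto
  moreover have "\<not> is_path {} ps" for ps using is_pathD(1,4)[of "{}" ps] unfolding T_def by auto
  ultimately show "\<not> facet_less 0 G H" "Fminus 0 F = {}"
    unfolding facet_less_def Fminus_def lex_less_def by auto
qed

lemma path_facet_AA_unique:
  assumes A: "A \<in> AA n" and ps: "is_path A ps" and B: "B \<in> AA n" and "set ps \<in> facets (DeltaA n B)"
  shows "B = A"
proof -
  have "set ps \<subseteq> T B" using assms(4) unfolding facets_def DeltaA_def by auto
  then have "A \<subseteq> B" using path_index_set[OF AA_D(1)[OF A] ps] unfolding T_def by auto
  then show ?thesis using card_subset_eq[OF AA_D(1)[OF B]] AA_D(4)[OF A] AA_D(4)[OF B] by metis
qed

lemma Fminus_path:
  assumes n: "n = 2 * m" and A: "A \<in> AA n" and ps: "is_path A ps"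
  shows "Fminus n (set ps) = minus_list m ps"
proof -
  have "B = A \<and> qs = ps" if "B \<in> AA n" "is_path B qs" "set qs = set ps" for B qs
    using path_unique[OF AA_D(1)[OF that(1)] AA_D(1)[OF A] that(2) ps that(3)] .
  then show ?thesis using A ps n unfolding Fminus_def by auto
qed

lemma facet_less_paths_iff:
  assumes n: "n = 2 * m" and A: "A \<in> AA n" "is_path A ps" and B: "B \<in> AA n" "is_path B qs"
  shows "facet_less n (set ps) (set qs) \<longleftrightarrow> lex_less A B \<or> (A = B \<and> path_less ps qs)"
proof
  assume "facet_less n (set ps) (set qs)"
  then obtain A' B' where A': "A' \<in> AA n" "set ps \<in> facets (DeltaA n A')"
    and B': "B' \<in> AA n" "set qs \<in> facets (DeltaA n B')"
    and less: "lex_less A' B' \<or> (A' = B' \<and> (\<exists>ps' qs'. is_path A' ps' \<and> is_path A' qs' \<and>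
      set ps' = set ps \<and> set qs' = set qs \<and> path_less ps' qs'))"
    unfolding facet_less_def by blast
  have "A' = A" "B' = B" using path_facet_AA_unique A' B' A B by blast+
  moreover have "ps' = ps \<and> qs' = qs"
    if "is_path A ps'" "is_path A qs'" "set ps' = set ps" "set qs' = set qs" "A = B" for ps' qs'
    using path_unique[OF AA_D(1)[OF A(1)] AA_D(1)[OF A(1)]] that A B by metis
  ultimately show "lex_less A B \<or> (A = B \<and> path_less ps qs)" using less by metis
next
  assume "lex_less A B \<or> (A = B \<and> path_less ps qs)"
  then show "facet_less n (set ps) (set qs)"
    using path_set_facet_DeltaA[OF n A] path_set_facet_DeltaA[OF n B] A B unfolding facet_less_def
    by blast
qed

lemma earlier_facet_misses_minus_point:
  assumes n: "n = 2 * m" and A: "A \<in> AA n" "is_path A ps" and B: "B \<in> AA n" "is_path B qs"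
    and less: "facet_less n (set qs) (set ps)"
  shows "\<exists>x\<in>minus_list m ps. x \<notin> set qs"
  using less unfolding facet_less_paths_iff[OF n B A]
proof
  assume "lex_less B A"
  then obtain c where c: "c \<in> A" "c \<notin> B" "m < c" using lex_less_AA_large_index[OF n A(1) B(1)]
    by blast
  then obtain x where "x \<in> minus_list m ps" "fst x = c \<or> snd x = c"
    using large_index_in_minus_list[OF A(2) AA_D(1)[OF A(1)]] by blast
  moreover have "set qs \<subseteq> T B" using is_pathD(4)[OF B(2)] .
  ultimately show ?thesis using c(2) unfolding T_def by auto
next
  assume "B = A \<and> path_less qs ps"
  then show ?thesis using path_less_misses_minus_point[OF A(2)] B(2) by blast
qed

lemma later_facet_misses_plus_point:
  assumes n: "n = 2 * m" and A: "A \<in> AA n" "is_path A ps" and B: "B \<in> AA n" "is_path B qs"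
    and less: "facet_less n (set ps) (set qs)"
  shows "\<exists>x\<in>set ps - minus_list m ps. x \<notin> set qs"
  using less unfolding facet_less_paths_iff[OF n A B]
proof
  assume "lex_less A B"
  then obtain c where c: "c \<in> A" "c \<notin> B" "c \<le> m" using lex_less_AA_small_index[OF n A(1) B(1)]
    by blast
  then obtain x where "x \<in> set ps - minus_list m ps" "fst x = c \<or> snd x = c"
    using small_index_off_minus_list[OF A(2) AA_D(1)[OF A(1)]] by blast
  moreover have "set qs \<subseteq> T B" using is_pathD(4)[OF B(2)] .
  ultimately show ?thesis using c(2) unfolding T_def by auto
next
  assume "A = B \<and> path_less ps qs"
  then show ?thesis using path_less_misses_plus_point[OF A(2)] B(2) by blast
qed

lemma shelling_before_path:
  assumes n: "n = 2 * m" "0 < m" and A: "A \<in> AA n" "is_path A ps"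
  shows "cplx {set ps} \<inter> cplx {G \<in> facets (Delta' n). facet_less n G (set ps)}
    = cplx {set ps - {x} | x. x \<in> minus_list m ps}"
proof (rule cplx_Int_eq_cplx_removals)
  fix G assume "G \<in> {G \<in> facets (Delta' n). facet_less n G (set ps)}"
  then obtain B qs where "B \<in> AA n" "is_path B qs" "G = set qs" "facet_less n (set qs) (set ps)"
    using facet_is_path[OF n] by blast
  then show "\<exists>x\<in>minus_list m ps. x \<notin> G" using earlier_facet_misses_minus_point[OF n(1) A] by blast
next
  fix x assume "x \<in> minus_list m ps"
  then obtain B qs where B: "B \<in> AA n" "is_path B qs" and "set ps - {x} \<subseteq> set qs"
    "lex_less B A \<or> (B = A \<and> path_less qs ps)"
    using minus_point_dropped[OF n(1) A] by blast
  moreover have "set qs \<in> facets (Delta' n)" using path_set_facet[OF n(1) B] .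
  ultimately show "\<exists>G\<in>{G \<in> facets (Delta' n). facet_less n G (set ps)}. set ps - {x} \<subseteq> G"
    using facet_less_paths_iff[OF n(1) B A] by blast
qed

lemma shelling_after_path:
  assumes n: "n = 2 * m" "0 < m" and A: "A \<in> AA n" "is_path A ps"
  shows "cplx {set ps} \<inter> cplx {G \<in> facets (Delta' n). facet_less n (set ps) G}
    = cplx {set ps - {x} | x. x \<in> set ps - minus_list m ps}"
proof (rule cplx_Int_eq_cplx_removals)
  fix G assume "G \<in> {G \<in> facets (Delta' n). facet_less n (set ps) G}"
  then obtain B qs where "B \<in> AA n" "is_path B qs" "G = set qs" "facet_less n (set ps) (set qs)"
    using facet_is_path[OF n] by blast
  then show "\<exists>x\<in>set ps - minus_list m ps. x \<notin> G" using later_facet_misses_plus_point[OF n(1) A]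
    by blast
next
  fix x assume "x \<in> set ps - minus_list m ps"
  then obtain B qs where B: "B \<in> AA n" "is_path B qs" and "set ps - {x} \<subseteq> set qs"
    "lex_less A B \<or> (B = A \<and> path_less ps qs)"
    using plus_point_dropped[OF n(1) A] by blast
  moreover have "set qs \<in> facets (Delta' n)" using path_set_facet[OF n(1) B] .
  ultimately show "\<exists>G\<in>{G \<in> facets (Delta' n). facet_less n (set ps) G}. set ps - {x} \<subseteq> G"
    using facet_less_paths_iff[OF n(1) A B] by blast
qed

theorem proposition5p4:
  fixes m n :: nat and F :: "(nat \<times> nat) set"
  assumes "n = 2 * m"
    and "F \<in> facets (Delta' n)"
  shows "cplx {F} \<inter> cplx {G \<in> facets (Delta' n). facet_less n G F}
           = cplx {F - {x} | x. x \<in> Fminus n F}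
     \<and> cplx {F} \<inter> cplx {G \<in> facets (Delta' n). facet_less n F G}
           = cplx {F - {x} | x. x \<in> Fplus n F}"
proof (cases "m = 0")
  case True
  then have "n = 0" "F = {}" using assms Delta'_0(1) by auto
  then show ?thesis using Delta'_0(2,3) unfolding Fplus_def cplx_def by simp
next
  case False
  then obtain A ps where A: "A \<in> AA n" "is_path A ps" and F: "F = set ps"
    using facet_is_path assms by blast
  have "Fminus n F = minus_list m ps" "Fplus n F = set ps - minus_list m ps"
    using Fminus_path[OF assms(1) A] F unfolding Fplus_def by auto
  then show ?thesis
    using shelling_before_path[OF assms(1) _ A] shelling_after_path[OF assms(1) _ A] False F
    by simp
qed

end
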